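(* Let $S$ be a countable discrete inverse semigroup with identity and $\alpha\colon S\to\mathcal I(X)$ a representation such that $X$ is $S$-domain measurable. Then there is a sequence $(P_n)$ of nonzero finite-rank orthogonal projections in $\mathcal R_X$ such that $\|P_nT-TP_n\|_2/\|P_n\|_2\to0$ for every $T\in\mathcal R_X$, where $\|\cdot\|_2$ is the Hilbert–Schmidt norm.
   Context: Inverse semigroup: each $s$ has a unique $s^*$ with $ss^*s=s$, $s^*ss^*=s^*$. A representation is a unital homomorphism $\alpha\colon S\to\mathcal I(X)$ into partial bijections of $X$; $D_{s^*s}$ is the domain of $\alpha_s$. $X$ is $S$-domain measurable if there is a finitely additive $\mu\colon\mathcal P(X)\to[0,\infty]$ with $\mu(X)=1$ and $\mu(B)=\mu(\alpha_s(B))$ for all $s$, $B\subseteq D_{s^*s}$. $V_s\delta_x=\delta_{\alpha_s(x)}$ if $x\in D_{s^*s}$, else $0$, on $\ell^2(X)$; $\mathcal R_X$ is the C*-algebra generated by $\{V_s\}$ and $\ell^\infty(X)$ acting by multiplication. *)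

theory Defs
  imports "HOL-Analysis.Analysis"
begin

definition inverse_monoid :: "('s::monoid_mult) itself \<Rightarrow> bool" where
  "inverse_monoid _ \<longleftrightarrow> (\<forall>s::'s. \<exists>!t. s * t * s = s \<and> t * s * t = t)"

definition partial_bij :: "('x \<rightharpoonup> 'x) \<Rightarrow> bool" where
  "partial_bij f \<longleftrightarrow> inj_on f (dom f)"

definition representation :: "('s::monoid_mult \<Rightarrow> ('x \<rightharpoonup> 'x)) \<Rightarrow> bool" where
  "representation \<alpha> \<longleftrightarrow>
     (\<forall>s. partial_bij (\<alpha> s)) \<and>
     \<alpha> 1 = Some \<and>
     (\<forall>s t. \<alpha> (s * t) = \<alpha> s \<circ>\<^sub>m \<alpha> t)"

definition domain_measurable :: "('s::monoid_mult \<Rightarrow> ('x \<rightharpoonup> 'x)) \<Rightarrow> bool" where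
  "domain_measurable \<alpha> \<longleftrightarrow>
     (\<exists>\<mu> :: 'x set \<Rightarrow> ennreal.
        (\<forall>A B. A \<inter> B = {} \<longrightarrow> \<mu> (A \<union> B) = \<mu> A + \<mu> B) \<and>
        \<mu> UNIV = 1 \<and>
        (\<forall>s B. B \<subseteq> dom (\<alpha> s) \<longrightarrow> \<mu> B = \<mu> (ran (\<alpha> s |` B))))"

text \<open>A (bounded) operator T on l^2(X) is represented by its matrix
K x y = <delta_x, T delta_y>.\<close>
type_synonym 'x mat = "'x \<Rightarrow> 'x \<Rightarrow> complex"

definition supp :: "('x \<Rightarrow> complex) \<Rightarrow> 'x set" where
  "supp v = {x. v x \<noteq> 0}"

definition vnorm2 :: "('x \<Rightarrow> complex) \<Rightarrow> real" where
  "vnorm2 v = (\<Sum>x\<in>supp v. (cmod (v x))\<^sup>2)"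

definition op_vals :: "'x mat \<Rightarrow> real set" where
  "op_vals K = {cmod (\<Sum>x\<in>supp u. \<Sum>y\<in>supp v. cnj (u x) * K x y * v y) | u v.
                 finite (supp u) \<and> finite (supp v) \<and> vnorm2 u \<le> 1 \<and> vnorm2 v \<le> 1}"

definition bounded_mat :: "'x mat \<Rightarrow> bool" where
  "bounded_mat K \<longleftrightarrow> bdd_above (op_vals K)"

definition op_norm :: "'x mat \<Rightarrow> real" where
  "op_norm K = Sup (op_vals K)"

definition mat_add :: "'x mat \<Rightarrow> 'x mat \<Rightarrow> 'x mat" where
  "mat_add A B = (\<lambda>x y. A x y + B x y)"

definition mat_diff :: "'x mat \<Rightarrow> 'x mat \<Rightarrow> 'x mat" where
  "mat_diff A B = (\<lambda>x y. A x y - B x y)"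

definition mat_scale :: "complex \<Rightarrow> 'x mat \<Rightarrow> 'x mat" where
  "mat_scale c A = (\<lambda>x y. c * A x y)"

definition mat_mult :: "'x mat \<Rightarrow> 'x mat \<Rightarrow> 'x mat" where
  "mat_mult A B = (\<lambda>x z. \<Sum>\<^sub>\<infinity>y. A x y * B y z)"

definition mat_adj :: "'x mat \<Rightarrow> 'x mat" where
  "mat_adj A = (\<lambda>x y. cnj (A y x))"

definition mat_zero :: "'x mat" where
  "mat_zero = (\<lambda>x y. 0)"

definition cstar_gen :: "'x mat set \<Rightarrow> 'x mat set" where
  "cstar_gen G = \<Inter>{A. G \<subseteq> A \<and> A \<subseteq> Collect bounded_mat \<and>
      (\<forall>a\<in>A. \<forall>b\<in>A. mat_add a b \<in> A \<and> mat_mult a b \<in> A) \<and>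
      (\<forall>c. \<forall>a\<in>A. mat_scale c a \<in> A) \<and>
      (\<forall>a\<in>A. mat_adj a \<in> A) \<and>
      (\<forall>f K. (\<forall>n. f n \<in> A) \<and> bounded_mat K \<and>
              (\<lambda>n. op_norm (mat_diff (f n) K)) \<longlonglongrightarrow> 0 \<longrightarrow> K \<in> A)}"

text \<open>V_s delta_x = delta_{alpha_s x} if x in dom alpha_s, else 0.\<close>
definition V_op :: "('s \<Rightarrow> ('x \<rightharpoonup> 'x)) \<Rightarrow> 's \<Rightarrow> 'x mat" where
  "V_op \<alpha> s = (\<lambda>y x. if \<alpha> s x = Some y then 1 else 0)"

definition mult_op :: "('x \<Rightarrow> complex) \<Rightarrow> 'x mat" where
  "mult_op f = (\<lambda>y x. if x = y then f x else 0)"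

definition R_X :: "('s \<Rightarrow> ('x \<rightharpoonup> 'x)) \<Rightarrow> 'x mat set" where
  "R_X \<alpha> = cstar_gen (range (V_op \<alpha>) \<union>
                       {mult_op f | f. \<exists>C. \<forall>x. cmod (f x) \<le> C})"

definition orth_proj :: "'x mat \<Rightarrow> bool" where
  "orth_proj P \<longleftrightarrow> bounded_mat P \<and> mat_mult P P = P \<and> mat_adj P = P"

definition finite_rank :: "'x mat \<Rightarrow> bool" where
  "finite_rank K \<longleftrightarrow> (\<exists>(n::nat) (b :: nat \<Rightarrow> 'x \<Rightarrow> complex).
      \<forall>y. \<exists>c :: nat \<Rightarrow> complex. \<forall>x. K x y = (\<Sum>i<n. c i * b i x))"

definition hs_norm :: "'x mat \<Rightarrow> real" where
  "hs_norm K = sqrt (\<Sum>\<^sub>\<infinity>p\<in>UNIV. (cmod (K (fst p) (snd p)))\<^sup>2)"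

end

theory Submission
  imports Defs
begin

text \<open>
  An invariant mean on X rules out paradoxical behaviour. If no finite set had small boundary
  under finitely many of the maps \<alpha> s, iterated neighbourhoods would grow exponentially and
  Hall's marriage theorem would give two injections of X into itself with disjoint ranges,
  each piecewise a composition of boundedly many of the maps and their inverses; invariance
  would give both ranges mean 1. Hence there are finite nonempty F{\o}lner sets A_n with
  |\<partial>_s A_n| \<le> |A_n|/n for the first n elements s of the countable S.

  Let P_n be the projection onto l2(A_n), so that the squared Hilbert-Schmidt norm of P_n is |A_n|.
  The squared Hilbert-Schmidt norm of [P_n, T] is the l2 mass of the matrix of T on the entries
  linking A_n with its complement. For V_s this mass is at most |\<partial>_s A_n|, for
  multiplication operators it vanishes, and the bounded operators for which it is o(|A_n|) are
  closed under sums, scalar multiples, adjoints, products and norm limits; so they include R_X.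
\<close>

section \<open>Hall's marriage theorem for families of finite sets\<close>

definition hall_condition :: "('l \<Rightarrow> 'r set) \<Rightarrow> bool" where
  "hall_condition M \<longleftrightarrow> (\<forall>L. finite L \<longrightarrow> card L \<le> card (\<Union>(M ` L)))"

lemma hall_conditionD: "hall_condition M \<Longrightarrow> finite L \<Longrightarrow> card L \<le> card (\<Union>(M ` L))"
  unfolding hall_condition_def by blast

lemma hall_condition_update_violated:
  assumes hall: "hall_condition M" and viol: "\<not> hall_condition (M(l := S))"
  obtains B where "finite B" "l \<notin> B" "card (\<Union>(M ` B) \<union> S) \<le> card B"
proof -
  obtain L where L: "finite L" "card (\<Union>((M(l := S)) ` L)) < card L"
    using viol unfolding hall_condition_def by (auto simp: not_le)
  have "l \<in> L"
  proof (rule ccontr)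
    assume "l \<notin> L"
    then have "(M(l := S)) ` L = M ` L" by auto
    then show False using L hall_conditionD[OF hall L(1)] by simp
  qed
  define B where "B = L - {l}"
  have "\<Union>((M(l := S)) ` L) = \<Union>(M ` B) \<union> S"
    using \<open>l \<in> L\<close> unfolding B_def by (auto split: if_splits)
  moreover have "card L = Suc (card B)"
    using card_Suc_Diff1[OF L(1) \<open>l \<in> L\<close>] unfolding B_def by simp
  ultimately show thesis using L by (intro that[of B]) (auto simp: B_def)
qed

text \<open>The critical-set argument: if deleting either of two candidates r1, r2 from M l
  violated Hall's condition, the two witnessing families together with l would violate it
  for M itself, by inclusion-exclusion.\<close>
lemma hall_condition_remove_one_of_two:
  assumes hall: "hall_condition M" and fin: "\<And>l. finite (M l)"
    and r: "r1 \<in> M l" "r2 \<in> M l" "r1 \<noteq> r2"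
  shows "hall_condition (M(l := M l - {r1})) \<or> hall_condition (M(l := M l - {r2}))"
proof (rule ccontr)
  assume neither: "\<not> ?thesis"
  then obtain B1 where B1: "finite B1" "l \<notin> B1" "card (\<Union>(M ` B1) \<union> (M l - {r1})) \<le> card B1"
    using hall_condition_update_violated[OF hall] by blast
  obtain B2 where B2: "finite B2" "l \<notin> B2" "card (\<Union>(M ` B2) \<union> (M l - {r2})) \<le> card B2"
    using hall_condition_update_violated[OF hall] neither by blast
  define U1 where "U1 = \<Union>(M ` B1) \<union> (M l - {r1})"
  define U2 where "U2 = \<Union>(M ` B2) \<union> (M l - {r2})"
  have fU: "finite U1" "finite U2" unfolding U1_def U2_def using B1 B2 fin by auto
  have "card (insert l (B1 \<union> B2)) \<le> card (\<Union>(M ` insert l (B1 \<union> B2)))"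
    using B1 B2 by (intro hall_conditionD[OF hall]) auto
  also have "\<dots> \<le> card (U1 \<union> U2)"
    using fU r unfolding U1_def U2_def by (intro card_mono) auto
  finally have union: "Suc (card (B1 \<union> B2)) \<le> card (U1 \<union> U2)" using B1 B2 by simp
  have "card (B1 \<inter> B2) \<le> card (\<Union>(M ` (B1 \<inter> B2)))"
    using B1 by (intro hall_conditionD[OF hall]) auto
  also have "\<dots> \<le> card (U1 \<inter> U2)"
    using fU unfolding U1_def U2_def by (intro card_mono) auto
  finally have inter: "card (B1 \<inter> B2) \<le> card (U1 \<inter> U2)" .
  have "card (B1 \<union> B2) + card (B1 \<inter> B2) = card B1 + card B2"
    using card_Un_Int[OF B1(1) B2(1)] by simp
  moreover have "card (U1 \<union> U2) + card (U1 \<inter> U2) = card U1 + card U2"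
    using card_Un_Int[OF fU] by simp
  ultimately show False using union inter B1(3) B2(3) unfolding U1_def U2_def by linarith
qed

definition remove_pairs :: "('l \<Rightarrow> 'r set) \<Rightarrow> ('l \<times> 'r) set \<Rightarrow> 'l \<Rightarrow> 'r set" where
  "remove_pairs N D l = {r \<in> N l. (l, r) \<notin> D}"

lemma hall_condition_Union_chain:
  assumes fin: "\<And>l. finite (N l)" and hall: "hall_condition N"
    and chain: "subset.chain {D. hall_condition (remove_pairs N D)} C"
  shows "hall_condition (remove_pairs N (\<Union>C))"
proof (cases "C = {}")
  case True
  have "remove_pairs N {} = N" unfolding remove_pairs_def by auto
  then show ?thesis using hall True by simp
next
  case False
  show ?thesis unfolding hall_condition_def
  proof (intro allI impI)
    fix L :: "'a set" assume L: "finite L"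
    define E where "E = \<Union>C \<inter> (L \<times> \<Union>(N ` L))"
    have "finite E" unfolding E_def using L fin by auto
    then obtain D0 where D0: "D0 \<in> C" "E \<subseteq> D0"
      using finite_subset_Union_chain[OF _ _ False chain] unfolding E_def by blast
    have "remove_pairs N (\<Union>C) l = remove_pairs N D0 l" if "l \<in> L" for l
      using D0 that unfolding remove_pairs_def E_def by blast
    then have "\<Union>(remove_pairs N (\<Union>C) ` L) = \<Union>(remove_pairs N D0 ` L)" by simp
    moreover have "hall_condition (remove_pairs N D0)"
      using D0(1) chain unfolding subset.chain_def by blast
    ultimately show "card L \<le> card (\<Union>(remove_pairs N (\<Union>C) ` L))"
      using hall_conditionD[OF _ L] by simp
  qed
qed

text \<open>Zorn's lemma yields a maximal set of pairs that can be deleted from N without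
  violating Hall's condition; by maximality every remaining set is a singleton.\<close>
theorem hall_marriage_finite_sets:
  assumes fin: "\<And>l. finite (N l)" and hall: "hall_condition N"
  obtains m where "inj m" "\<And>l. m l \<in> N l"
proof -
  obtain D where D: "hall_condition (remove_pairs N D)"
    and maximal: "\<And>D'. hall_condition (remove_pairs N D') \<Longrightarrow> D \<subseteq> D' \<Longrightarrow> D' = D"
    using subset_Zorn'[of "{D. hall_condition (remove_pairs N D)}"]
      hall_condition_Union_chain[OF fin hall] by blast
  define M where "M = remove_pairs N D"
  have finM: "finite (M l)" for l unfolding M_def remove_pairs_def using fin by auto
  have remove: "M(l := M l - {r}) = remove_pairs N (insert (l, r) D)" for l r
    unfolding M_def remove_pairs_def by (auto simp: fun_eq_iff)
  have "\<exists>r. M l = {r}" for l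
  proof -
    have "M l \<noteq> {}" using hall_conditionD[OF D, of "{l}"] unfolding M_def by auto
    moreover have "card (M l) \<le> 1"
    proof (rule ccontr)
      assume "\<not> card (M l) \<le> 1"
      then obtain r1 r2 where r: "r1 \<in> M l" "r2 \<in> M l" "r1 \<noteq> r2"
        using card_le_Suc0_iff_eq[OF finM] by (metis One_nat_def)
      then obtain r where "r \<in> M l" "hall_condition (M(l := M l - {r}))"
        using hall_condition_remove_one_of_two[OF D[folded M_def] finM r] by blast
      then show False using maximal[of "insert (l, r) D"] unfolding remove
        by (auto simp: M_def remove_pairs_def)
    qed
    ultimately have "card (M l) = 1" using finM[of l] card_0_eq[OF finM[of l]] by linarith
    then show ?thesis by (simp add: card_1_singleton_iff)
  qed
  then obtain m where m: "\<And>l. M l = {m l}" by metis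
  have "inj m"
  proof (rule injI, rule ccontr)
    fix l l' assume "m l = m l'" "l \<noteq> l'"
    then show False using hall_conditionD[OF D, of "{l, l'}"] m unfolding M_def by auto
  qed
  moreover have "m l \<in> N l" for l using m[of l] unfolding M_def remove_pairs_def by auto
  ultimately show thesis by (rule that)
qed

section \<open>F{\o}lner sets from an invariant mean\<close>

lemma ran_restrict_map_eq: "ran (h |` B) = {y. \<exists>x\<in>B. h x = Some y}"
  by (auto simp: ran_def restrict_map_def split: if_splits)

definition inv_map :: "('x \<rightharpoonup> 'y) \<Rightarrow> ('y \<rightharpoonup> 'x)" where
  "inv_map g y = (if \<exists>x. g x = Some y then Some (THE x. g x = Some y) else None)"

lemma inv_map_Some:
  assumes "inj_on g (dom g)" "g x = Some y"
  shows "inv_map g y = Some x"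
proof -
  have "(THE x. g x = Some y) = x"
    using assms by (intro the_equality) (auto simp: inj_on_def domI)
  then show ?thesis using assms unfolding inv_map_def by auto
qed

lemma inv_map_SomeD:
  assumes "inj_on g (dom g)" "inv_map g y = Some x"
  shows "g x = Some y"
proof -
  obtain x' where x': "g x' = Some y" using assms(2) unfolding inv_map_def by (auto split: if_splits)
  then show ?thesis using inv_map_Some[OF assms(1) x'] assms(2) by simp
qed

lemma inv_map_Some_iff: "inj_on g (dom g) \<Longrightarrow> inv_map g y = Some x \<longleftrightarrow> g x = Some y"
  using inv_map_Some inv_map_SomeD by metis

fun apply_word :: "('x \<rightharpoonup> 'x) list \<Rightarrow> 'x \<rightharpoonup> 'x" where
  "apply_word [] x = Some x"
| "apply_word (h # hs) x = (case h x of None \<Rightarrow> None | Some y \<Rightarrow> apply_word hs y)"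

lemma apply_word_snoc:
  "apply_word (hs @ [h]) x = (case apply_word hs x of None \<Rightarrow> None | Some z \<Rightarrow> h z)"
  by (induction hs arbitrary: x) (auto split: option.splits)

definition map_boundary :: "('x \<rightharpoonup> 'x) \<Rightarrow> 'x set \<Rightarrow> 'x set" where
  "map_boundary g A = {x. \<exists>y. g x = Some y \<and> (y \<in> A) \<noteq> (x \<in> A)}"

lemma finite_map_boundary:
  assumes g: "inj_on g (dom g)" and A: "finite A"
  shows "finite (map_boundary g A)"
proof -
  have "map_boundary g A \<subseteq> A \<union> (\<lambda>y. the (inv_map g y)) ` A"
    using inv_map_Some[OF g] unfolding map_boundary_def by force
  then show ?thesis by (rule finite_subset) (use A in auto)
qed

locale finitely_additive_mean =
  fixes \<mu> :: "'x set \<Rightarrow> ennreal"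
  assumes additive: "\<And>A B. A \<inter> B = {} \<Longrightarrow> \<mu> (A \<union> B) = \<mu> A + \<mu> B"
    and normalized: "\<mu> UNIV = 1"
begin

lemma mean_empty: "\<mu> {} = 0"
proof -
  have "\<mu> UNIV = \<mu> UNIV + \<mu> {}" using additive[of UNIV "{}"] by simp
  then show ?thesis using normalized by simp
qed

lemma mean_mono: "A \<subseteq> B \<Longrightarrow> \<mu> A \<le> \<mu> B"
  using additive[of A "B - A"] by (simp add: Un_absorb1)

lemma mean_finite_UN:
  assumes "finite I" "disjoint_family_on C I"
  shows "\<mu> (\<Union>i\<in>I. C i) = (\<Sum>i\<in>I. \<mu> (C i))"
  using assms
proof (induction I rule: finite_induct)
  case empty then show ?case by (simp add: mean_empty)
next
  case (insert i I)
  have "disjoint_family_on C I" using insert(4) by (meson disjoint_family_on_mono subset_insertI)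
  moreover have "C i \<inter> (\<Union>j\<in>I. C j) = {}" using insert(2,4) unfolding disjoint_family_on_def by auto
  ultimately show ?case using insert additive by simp
qed

end

locale invariant_mean = finitely_additive_mean \<mu> for \<mu> :: "'x set \<Rightarrow> ennreal" +
  fixes G :: "('x \<rightharpoonup> 'x) set"
  assumes finite_G: "finite G"
    and inj_G: "\<And>g. g \<in> G \<Longrightarrow> inj_on g (dom g)"
    and invariant_G: "\<And>g B. g \<in> G \<Longrightarrow> B \<subseteq> dom g \<Longrightarrow> \<mu> B = \<mu> (ran (g |` B))"
begin

definition moves :: "('x \<rightharpoonup> 'x) set" where
  "moves = insert Some (G \<union> inv_map ` G)"

lemma finite_moves: "finite moves"
  unfolding moves_def using finite_G by auto

lemma invariant_inv_map:
  assumes g: "g \<in> G" and B: "B \<subseteq> dom (inv_map g)"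
  shows "\<mu> B = \<mu> (ran (inv_map g |` B))"
proof -
  note inv = inv_map_Some_iff[OF inj_G[OF g]]
  define C where "C = ran (inv_map g |` B)"
  have "C \<subseteq> dom g" using inv unfolding C_def ran_restrict_map_eq by auto
  moreover have "ran (g |` C) = B"
  proof (intro equalityI subsetI)
    fix y assume "y \<in> B"
    then obtain x where "inv_map g y = Some x" using B by auto
    then show "y \<in> ran (g |` C)" using \<open>y \<in> B\<close> inv unfolding C_def ran_restrict_map_eq by auto
  qed (use inv in \<open>auto simp: C_def ran_restrict_map_eq\<close>)
  ultimately show ?thesis using invariant_G[OF g, of C] unfolding C_def by simp
qed

lemma invariant_moves: "h \<in> moves \<Longrightarrow> B \<subseteq> dom h \<Longrightarrow> \<mu> B = \<mu> (ran (h |` B))"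
  unfolding moves_def using invariant_G invariant_inv_map by (auto simp: ran_restrict_map_eq)

lemma invariant_word:
  "set hs \<subseteq> moves \<Longrightarrow> B \<subseteq> dom (apply_word hs) \<Longrightarrow> \<mu> B = \<mu> (ran (apply_word hs |` B))"
proof (induction hs arbitrary: B)
  case Nil then show ?case by (simp add: ran_restrict_map_eq)
next
  case (Cons h hs)
  define B' where "B' = ran (h |` B)"
  have "B \<subseteq> dom h" "B' \<subseteq> dom (apply_word hs)"
    using Cons(3) unfolding B'_def ran_restrict_map_eq by (auto split: option.splits)
  moreover have "ran (apply_word (h # hs) |` B) = ran (apply_word hs |` B')"
    unfolding B'_def ran_restrict_map_eq by (auto split: option.splits)
  moreover have "h \<in> moves" "set hs \<subseteq> moves" using Cons(2) by auto
  ultimately show ?case using invariant_moves Cons.IH unfolding B'_def by metis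
qed

text \<open>Sorting the points by the word that moves them cuts X into finitely many pieces, each
  transported invariantly onto its image.\<close>
lemma mean_range_word_injection:
  assumes W: "finite W" "\<And>w. w \<in> W \<Longrightarrow> set w \<subseteq> moves"
    and f: "inj f" and reach: "\<And>x. \<exists>w\<in>W. apply_word w x = Some (f x)"
  shows "\<mu> (range f) = 1"
proof -
  obtain word where word: "\<And>x. word x \<in> W" "\<And>x. apply_word (word x) x = Some (f x)"
    using reach by metis
  define B where "B w = {x. word x = w}" for w
  have UB: "(\<Union>w\<in>W. B w) = UNIV" unfolding B_def using word by auto
  have disjB: "disjoint_family_on B W" unfolding disjoint_family_on_def B_def by auto
  have image: "ran (apply_word w |` B w) = f ` B w" for w
    unfolding ran_restrict_map_eq B_def using word by force
  have "range f = (\<Union>w\<in>W. ran (apply_word w |` B w))"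
    unfolding image using UB by blast
  moreover have "disjoint_family_on (\<lambda>w. ran (apply_word w |` B w)) W"
    using disjB f unfolding image disjoint_family_on_def inj_def by blast
  moreover have dom: "B w \<subseteq> dom (apply_word w)" for w unfolding B_def using word by auto
  ultimately have "\<mu> (range f) = (\<Sum>w\<in>W. \<mu> (ran (apply_word w |` B w)))"
    using mean_finite_UN[OF W(1)] by simp
  also have "\<dots> = (\<Sum>w\<in>W. \<mu> (B w))"
    using invariant_word[OF W(2) dom] by (intro sum.cong) auto
  also have "\<dots> = 1" using mean_finite_UN[OF W(1) disjB] UB normalized by simp
  finally show ?thesis .
qed

definition neighbourhood :: "'x set \<Rightarrow> 'x set" where
  "neighbourhood A = {y. \<exists>h\<in>moves. \<exists>x\<in>A. h x = Some y}"

lemma subset_neighbourhood: "A \<subseteq> neighbourhood A"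
  unfolding neighbourhood_def moves_def by auto

lemma finite_neighbourhood: "finite A \<Longrightarrow> finite (neighbourhood A)"
proof -
  assume A: "finite A"
  have "neighbourhood A \<subseteq> (\<Union>h\<in>moves. (\<lambda>x. the (h x)) ` A)"
    unfolding neighbourhood_def by force
  then show ?thesis using A finite_moves by (auto intro: finite_subset)
qed

lemma finite_neighbourhood_iterate: "finite A \<Longrightarrow> finite ((neighbourhood ^^ k) A)"
  by (induction k) (auto intro: finite_neighbourhood)

lemma neighbourhood_iterate_UN: "(neighbourhood ^^ k) A = (\<Union>x\<in>A. (neighbourhood ^^ k) {x})"
proof (induction k)
  case (Suc k)
  then show ?case unfolding neighbourhood_def by auto
qed auto

lemma neighbourhood_iterate_word:
  "y \<in> (neighbourhood ^^ k) {x} \<Longrightarrow> \<exists>hs. set hs \<subseteq> moves \<and> length hs = k \<and> apply_word hs x = Some y"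
proof (induction k arbitrary: y)
  case 0 then show ?case by (intro exI[of _ "[]"]) auto
next
  case (Suc k)
  then obtain h y' where h: "h \<in> moves" "y' \<in> (neighbourhood ^^ k) {x}" "h y' = Some y"
    unfolding neighbourhood_def by auto
  then obtain hs where "set hs \<subseteq> moves" "length hs = k" "apply_word hs x = Some y'"
    using Suc.IH by blast
  then show ?case using h by (intro exI[of _ "hs @ [h]"]) (auto simp: apply_word_snoc)
qed

lemma entering_subset_neighbourhood:
  assumes g: "g \<in> G"
  shows "{x. x \<notin> A \<and> (\<exists>y\<in>A. g x = Some y)} \<subseteq> neighbourhood A - A"
proof
  fix x assume "x \<in> {x. x \<notin> A \<and> (\<exists>y\<in>A. g x = Some y)}"
  then obtain y where "y \<in> A" "inv_map g y = Some x" "x \<notin> A"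
    using inv_map_Some[OF inj_G[OF g]] by blast
  moreover have "inv_map g \<in> moves" unfolding moves_def using g by auto
  ultimately show "x \<in> neighbourhood A - A" unfolding neighbourhood_def by blast
qed

lemma card_leaving_le:
  assumes A: "finite A" and g: "g \<in> G"
  shows "card {x\<in>A. \<exists>y. g x = Some y \<and> y \<notin> A} \<le> card (neighbourhood A - A)"
proof -
  define out where "out = {x\<in>A. \<exists>y. g x = Some y \<and> y \<notin> A}"
  have "(\<lambda>x. the (g x)) ` out \<subseteq> neighbourhood A - A"
  proof
    fix y assume "y \<in> (\<lambda>x. the (g x)) ` out"
    then obtain x where "x \<in> A" "g x = Some y" "y \<notin> A" unfolding out_def by auto
    moreover have "g \<in> moves" unfolding moves_def using g by auto
    ultimately show "y \<in> neighbourhood A - A" unfolding neighbourhood_def by blast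
  qed
  moreover have "inj_on (\<lambda>x. the (g x)) out"
  proof (rule inj_onI)
    fix x x' assume "x \<in> out" "x' \<in> out" "the (g x) = the (g x')"
    then have "g x = g x'" "x \<in> dom g" "x' \<in> dom g" unfolding out_def by auto
    then show "x = x'" using inj_onD[OF inj_G[OF g]] by blast
  qed
  moreover have "finite (neighbourhood A - A)" using finite_neighbourhood[OF A] by simp
  ultimately show ?thesis unfolding out_def[symmetric] using card_mono card_image by metis
qed

text \<open>A boundary point leaves A along g or enters A along g, i.e. leaves it along the inverse;
  either way it yields a new neighbour, injectively in each case.\<close>
lemma neighbourhood_expands:
  assumes A: "finite A" and g: "g \<in> G"
  shows "real (card (map_boundary g A)) \<le> 2 * (real (card (neighbourhood A)) - card A)"
proof -
  define out where "out = {x\<in>A. \<exists>y. g x = Some y \<and> y \<notin> A}"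
  define inn where "inn = {x. x \<notin> A \<and> (\<exists>y\<in>A. g x = Some y)}"
  define new where "new = neighbourhood A - A"
  have fin_new: "finite new" unfolding new_def using finite_neighbourhood[OF A] by simp
  have inn: "card inn \<le> card new" "finite inn"
    using entering_subset_neighbourhood[OF g, of A] fin_new unfolding inn_def new_def
    by (auto intro: card_mono finite_subset)
  have "map_boundary g A \<subseteq> out \<union> inn"
    unfolding map_boundary_def out_def inn_def by auto
  then have "card (map_boundary g A) \<le> card (out \<union> inn)"
    using A inn(2) unfolding out_def by (intro card_mono) auto
  also have "\<dots> \<le> 2 * card new"
    using card_Un_le[of out inn] card_leaving_le[OF A g] inn(1) unfolding out_def new_def by linarith
  also have "card new = card (neighbourhood A) - card A"
    unfolding new_def using card_Diff_subset[OF A subset_neighbourhood] .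
  finally show ?thesis
    using card_mono[OF finite_neighbourhood[OF A] subset_neighbourhood[of A]] by (simp add: of_nat_diff)
qed

lemma neighbourhood_iterate_expands:
  fixes \<epsilon> :: real
  assumes eps: "\<epsilon> > 0"
    and large: "\<And>A. finite A \<Longrightarrow> A \<noteq> {} \<Longrightarrow> \<exists>g\<in>G. real (card (map_boundary g A)) > \<epsilon> * card A"
    and A: "finite A"
  shows "(1 + \<epsilon>/2) ^ k * card A \<le> card ((neighbourhood ^^ k) A)"
proof (induction k)
  case (Suc k)
  define A' where "A' = (neighbourhood ^^ k) A"
  have "finite A'" unfolding A'_def using finite_neighbourhood_iterate[OF A] .
  have "(1 + \<epsilon>/2) * card A' \<le> card (neighbourhood A')"
  proof (cases "A' = {}")
    case False
    then obtain g where "g \<in> G" "real (card (map_boundary g A')) > \<epsilon> * card A'"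
      using large \<open>finite A'\<close> by blast
    moreover have "(1 + \<epsilon>/2) * card A' = card A' + \<epsilon> * card A' / 2" by (simp add: algebra_simps)
    ultimately show ?thesis using neighbourhood_expands[OF \<open>finite A'\<close>] by fastforce
  qed simp
  moreover have "(1 + \<epsilon>/2) ^ Suc k * card A \<le> (1 + \<epsilon>/2) * card A'"
    using Suc eps unfolding A'_def by (simp add: mult.assoc)
  ultimately show ?case unfolding A'_def by simp
qed simp

lemma hall_condition_doubled_neighbourhoods:
  assumes doubling: "\<And>A. finite A \<Longrightarrow> 2 * card A \<le> card ((neighbourhood ^^ k) A)"
  shows "hall_condition (\<lambda>p :: 'x \<times> bool. (neighbourhood ^^ k) {fst p})"
  unfolding hall_condition_def
proof (intro allI impI)
  fix L :: "('x \<times> bool) set" assume L: "finite L"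
  have "card L \<le> card (fst ` L \<times> (UNIV :: bool set))"
    using L by (intro card_mono) force+
  also have "\<dots> \<le> card ((neighbourhood ^^ k) (fst ` L))"
    using doubling[of "fst ` L"] L by (simp add: card_cartesian_product)
  also have "(neighbourhood ^^ k) (fst ` L) = (\<Union>p\<in>L. (neighbourhood ^^ k) {fst p})"
    by (subst neighbourhood_iterate_UN) auto
  finally show "card L \<le> card (\<Union>p\<in>L. (neighbourhood ^^ k) {fst p})" .
qed

theorem folner_set_exists:
  fixes \<epsilon> :: real
  assumes eps: "\<epsilon> > 0"
  shows "\<exists>A. finite A \<and> A \<noteq> {} \<and> (\<forall>g\<in>G. real (card (map_boundary g A)) \<le> \<epsilon> * card A)"
proof (rule ccontr)
  assume "\<not> ?thesis"
  then have large: "\<And>A. finite A \<Longrightarrow> A \<noteq> {} \<Longrightarrow> \<exists>g\<in>G. real (card (map_boundary g A)) > \<epsilon> * card A"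
    by (meson not_le)
  obtain k where k: "2 < (1 + \<epsilon>/2) ^ k" using real_arch_pow[of "1 + \<epsilon>/2" 2] eps by auto
  have "2 * card A \<le> card ((neighbourhood ^^ k) A)" if "finite A" for A
  proof -
    have "2 * real (card A) \<le> (1 + \<epsilon>/2) ^ k * card A" using k by (intro mult_right_mono) auto
    then show ?thesis using neighbourhood_iterate_expands[OF eps large that, of k] by linarith
  qed
  then obtain m :: "'x \<times> bool \<Rightarrow> 'x" where m: "inj m" "\<And>p. m p \<in> (neighbourhood ^^ k) {fst p}"
    using hall_marriage_finite_sets[OF finite_neighbourhood_iterate hall_condition_doubled_neighbourhoods]
    by blast
  define W where "W = {hs. set hs \<subseteq> moves \<and> length hs = k}"
  have "finite W" unfolding W_def using finite_moves by (rule finite_lists_length_eq)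
  moreover have "\<exists>w\<in>W. apply_word w x = Some (m (x, i))" for x i
    using neighbourhood_iterate_word m(2)[of "(x, i)"] unfolding W_def by simp
  moreover have "inj (\<lambda>x. m (x, i))" for i using m(1) unfolding inj_def by blast
  ultimately have full: "\<mu> (range (\<lambda>x. m (x, i))) = 1" for i
    by (intro mean_range_word_injection[of W]) (auto simp: W_def)
  have "range (\<lambda>x. m (x, True)) \<inter> range (\<lambda>x. m (x, False)) = {}"
    using m(1) unfolding inj_def by auto
  then have "\<mu> (range (\<lambda>x. m (x, True)) \<union> range (\<lambda>x. m (x, False))) = 2"
    using additive full by simp
  moreover have "\<mu> (range (\<lambda>x. m (x, True)) \<union> range (\<lambda>x. m (x, False))) \<le> 1"
    using mean_mono[of _ UNIV] normalized by simp
  ultimately show False by simp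
qed

end

section \<open>Bounded matrices\<close>

abbreviation l2_on :: "'x set \<Rightarrow> ('x \<Rightarrow> complex) \<Rightarrow> real" where
  "l2_on U u \<equiv> L2_set (\<lambda>x. cmod (u x)) U"

lemma l2_on_squared: "(l2_on U u)\<^sup>2 = (\<Sum>x\<in>U. (cmod (u x))\<^sup>2)"
  unfolding L2_set_def by (simp add: sum_nonneg)

lemma l2_on_mono: "finite V \<Longrightarrow> U \<subseteq> V \<Longrightarrow> l2_on U u \<le> l2_on V u"
  unfolding L2_set_def by (intro real_sqrt_le_mono sum_mono2) auto

definition sesq_form :: "'x mat \<Rightarrow> 'x set \<Rightarrow> 'x set \<Rightarrow> ('x \<Rightarrow> complex) \<Rightarrow> ('x \<Rightarrow> complex) \<Rightarrow> complex" where
  "sesq_form T U V u v = (\<Sum>x\<in>U. \<Sum>y\<in>V. cnj (u x) * T x y * v y)"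

lemma sesq_form_add: "sesq_form (mat_add A B) U V u v = sesq_form A U V u v + sesq_form B U V u v"
  unfolding sesq_form_def mat_add_def by (simp add: sum.distrib[symmetric] algebra_simps)

lemma sesq_form_scale: "sesq_form (mat_scale c A) U V u v = c * sesq_form A U V u v"
  unfolding sesq_form_def mat_scale_def by (simp add: sum_distrib_left algebra_simps)

lemma sesq_form_adj: "sesq_form (mat_adj A) U V u v = cnj (sesq_form A V U v u)"
  unfolding sesq_form_def mat_adj_def by (subst sum.swap) (simp add: mult.commute mult.left_commute)

lemma zero_in_op_vals: "0 \<in> op_vals T"
proof -
  have s: "supp (\<lambda>_. 0::complex) = {}" by (simp add: supp_def)
  show ?thesis unfolding op_vals_def
    by (rule CollectI, rule exI[of _ "\<lambda>_. 0"], rule exI[of _ "\<lambda>_. 0"]) (simp add: s vnorm2_def)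
qed

lemma op_norm_nonneg: "bounded_mat T \<Longrightarrow> 0 \<le> op_norm T"
  unfolding op_norm_def bounded_mat_def using cSup_upper[OF zero_in_op_vals] by blast

lemma op_vals_le_op_norm: "bounded_mat T \<Longrightarrow> c \<in> op_vals T \<Longrightarrow> c \<le> op_norm T"
  unfolding op_norm_def bounded_mat_def by (rule cSup_upper)

lemma sum_supp_eq:
  assumes "finite U" "supp u \<subseteq> U" "\<And>x. x \<in> U \<Longrightarrow> u x = 0 \<Longrightarrow> f x = 0"
  shows "sum f (supp u) = sum f U"
  by (rule sum.mono_neutral_left) (use assms in \<open>auto simp: supp_def\<close>)

lemma vnorm2_normalized:
  assumes U: "finite U" and a: "l2_on U u > 0"
  shows "vnorm2 (\<lambda>x. if x \<in> U then u x / l2_on U u else 0) = 1"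
proof -
  define a where "a = l2_on U u"
  have "vnorm2 (\<lambda>x. if x \<in> U then u x / a else 0) = (\<Sum>x\<in>U. (cmod (u x))\<^sup>2 / a\<^sup>2)"
    unfolding vnorm2_def by (subst sum_supp_eq[OF U]) (auto simp: supp_def norm_divide power_divide a_def)
  also have "\<dots> = a\<^sup>2 / a\<^sup>2" unfolding sum_divide_distrib[symmetric] a_def l2_on_squared ..
  finally show ?thesis using a unfolding a_def by simp
qed

text \<open>The supremum defining op_norm ranges over unit vectors; rescaling arbitrary finitely
  supported vectors gives the usual bound on the sesquilinear form.\<close>
lemma norm_sesq_form_le:
  assumes T: "bounded_mat T" and U: "finite U" and V: "finite V"
  shows "cmod (sesq_form T U V u v) \<le> op_norm T * l2_on U u * l2_on V v"
proof (cases "l2_on U u = 0 \<or> l2_on V v = 0")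
  case True
  then have "sesq_form T U V u v = 0"
    unfolding sesq_form_def using U V by (auto simp: L2_set_eq_0_iff intro!: sum.neutral)
  then show ?thesis using op_norm_nonneg[OF T] by simp
next
  case False
  define a where "a = l2_on U u"
  define b where "b = l2_on V v"
  have a: "a > 0" and b: "b > 0" using False L2_set_nonneg unfolding a_def b_def
    by (metis less_eq_real_def)+
  define u' where "u' x = (if x \<in> U then u x / a else 0)" for x
  define v' where "v' x = (if x \<in> V then v x / b else 0)" for x
  have su: "supp u' \<subseteq> U" and sv: "supp v' \<subseteq> V" unfolding supp_def u'_def v'_def by auto
  have fin: "finite (supp u')" "finite (supp v')"
    using finite_subset[OF su U] finite_subset[OF sv V] .
  have unit: "vnorm2 u' = 1" "vnorm2 v' = 1"
    using vnorm2_normalized[OF U] vnorm2_normalized[OF V] a b unfolding u'_def v'_def a_def b_def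
    by simp_all
  have "(\<Sum>x\<in>supp u'. \<Sum>y\<in>supp v'. cnj (u' x) * T x y * v' y)
      = (\<Sum>x\<in>U. \<Sum>y\<in>V. cnj (u' x) * T x y * v' y)"
    by (subst sum_supp_eq[OF U su], simp, intro sum.cong refl sum_supp_eq[OF V sv]) simp
  also have "\<dots> = sesq_form T U V u v / (a * b)"
    unfolding sesq_form_def sum_divide_distrib by (intro sum.cong refl) (simp add: u'_def v'_def)
  finally have "cmod (sesq_form T U V u v / (a * b)) \<in> op_vals T"
    unfolding op_vals_def using fin unit by (intro CollectI exI[of _ u'] exI[of _ v']) simp
  then have "cmod (sesq_form T U V u v) / (a * b) \<le> op_norm T"
    using op_vals_le_op_norm[OF T] a b by (simp add: norm_divide norm_mult)
  then show ?thesis using a b unfolding a_def b_def by (simp add: divide_le_eq mult.assoc)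
qed

lemma bounded_matI:
  assumes C: "C \<ge> 0"
    and form: "\<And>U V u v. finite U \<Longrightarrow> finite V \<Longrightarrow> cmod (sesq_form T U V u v) \<le> C * l2_on U u * l2_on V v"
  shows "bounded_mat T" "op_norm T \<le> C"
proof -
  have le: "c \<le> C" if c: "c \<in> op_vals T" for c
  proof -
    obtain u v where uv: "c = cmod (sesq_form T (supp u) (supp v) u v)" "finite (supp u)" "finite (supp v)"
      "vnorm2 u \<le> 1" "vnorm2 v \<le> 1"
      using c unfolding op_vals_def sesq_form_def by blast
    have "l2_on (supp u) u \<le> 1" "l2_on (supp v) v \<le> 1"
      using uv(4,5) unfolding L2_set_def vnorm2_def by simp_all
    then have "C * l2_on (supp u) u * l2_on (supp v) v \<le> C * 1 * 1"
      using C by (intro mult_mono) auto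
    then show ?thesis using form[OF uv(2,3), of u v] uv(1) by simp
  qed
  show "bounded_mat T" unfolding bounded_mat_def using le by (intro bdd_aboveI) blast
  show "op_norm T \<le> C" unfolding op_norm_def using le zero_in_op_vals by (intro cSup_least) auto
qed

lemma le_sq_of_le_mult_sqrt:
  fixes S a :: real
  assumes S: "0 \<le> S" "S \<le> a * sqrt S" and a: "0 \<le> a"
  shows "S \<le> a\<^sup>2"
proof (cases "S = 0")
  case False
  then have pos: "sqrt S > 0" using S by simp
  have "sqrt S * sqrt S \<le> a * sqrt S" using S by simp
  then have "sqrt S \<le> a" using pos by (rule mult_right_le_imp_le)
  then have "(sqrt S)\<^sup>2 \<le> a\<^sup>2" using pos by (intro power_mono) auto
  then show ?thesis using S by simp
qed (use a in auto)

text \<open>Testing the form against the image vector itself: the finite sections of T are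
  bounded by op_norm T on l2.\<close>
lemma sum_sq_norm_mat_vec_le:
  assumes T: "bounded_mat T" and Y: "finite Y" and Z: "finite Z"
  shows "(\<Sum>y\<in>Y. (cmod (\<Sum>z\<in>Z. T y z * c z))\<^sup>2) \<le> (op_norm T)\<^sup>2 * (\<Sum>z\<in>Z. (cmod (c z))\<^sup>2)"
proof -
  define d where "d y = (\<Sum>z\<in>Z. T y z * c z)" for y
  define S where "S = (\<Sum>y\<in>Y. (cmod (d y))\<^sup>2)"
  have S0: "S \<ge> 0" unfolding S_def by (simp add: sum_nonneg)
  have "sesq_form T Y Z d c = (\<Sum>y\<in>Y. cnj (d y) * d y)"
    unfolding sesq_form_def d_def by (simp add: sum_distrib_left mult.assoc)
  also have "\<dots> = S"
    unfolding S_def of_real_sum by (intro sum.cong refl) (metis complex_norm_square mult.commute of_real_power)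
  finally have "cmod (complex_of_real S) \<le> op_norm T * l2_on Y d * l2_on Z c"
    using norm_sesq_form_le[OF T Y Z, of d c] by simp
  moreover have "l2_on Y d = sqrt S" unfolding S_def L2_set_def ..
  ultimately have "S \<le> (op_norm T * l2_on Z c) * sqrt S" using S0 by (simp add: ac_simps)
  then have "S \<le> (op_norm T * l2_on Z c)\<^sup>2"
    using S0 op_norm_nonneg[OF T] by (intro le_sq_of_le_mult_sqrt) auto
  then show ?thesis unfolding S_def d_def power_mult_distrib l2_on_squared .
qed

lemma sum_sq_norm_vec_mat_le:
  assumes T: "bounded_mat T" and U: "finite U" and Y: "finite Y"
  shows "(\<Sum>y\<in>Y. (cmod (\<Sum>x\<in>U. cnj (u x) * T x y))\<^sup>2) \<le> (op_norm T)\<^sup>2 * (\<Sum>x\<in>U. (cmod (u x))\<^sup>2)"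
proof -
  define a where "a y = (\<Sum>x\<in>U. cnj (u x) * T x y)" for y
  define S where "S = (\<Sum>y\<in>Y. (cmod (a y))\<^sup>2)"
  have S0: "S \<ge> 0" unfolding S_def by (simp add: sum_nonneg)
  have "sesq_form T U Y u (\<lambda>y. cnj (a y)) = (\<Sum>y\<in>Y. a y * cnj (a y))"
    unfolding sesq_form_def a_def by (subst sum.swap) (simp add: sum_distrib_right)
  also have "\<dots> = S"
    unfolding S_def of_real_sum by (intro sum.cong refl) (metis complex_norm_square of_real_power)
  finally have "cmod (complex_of_real S) \<le> op_norm T * l2_on U u * l2_on Y (\<lambda>y. cnj (a y))"
    using norm_sesq_form_le[OF T U Y, of u "\<lambda>y. cnj (a y)"] by simp
  moreover have "l2_on Y (\<lambda>y. cnj (a y)) = sqrt S" unfolding S_def L2_set_def by simp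
  ultimately have "S \<le> (op_norm T * l2_on U u) * sqrt S" using S0 by simp
  then have "S \<le> (op_norm T * l2_on U u)\<^sup>2"
    using S0 op_norm_nonneg[OF T] by (intro le_sq_of_le_mult_sqrt) auto
  then show ?thesis unfolding S_def a_def power_mult_distrib l2_on_squared .
qed

lemma sum_sq_norm_row_le:
  "bounded_mat T \<Longrightarrow> finite Z \<Longrightarrow> (\<Sum>z\<in>Z. (cmod (T x z))\<^sup>2) \<le> (op_norm T)\<^sup>2"
  using sum_sq_norm_vec_mat_le[of T "{x}" Z "\<lambda>_. 1"] by simp

lemma sum_sq_norm_col_le:
  "bounded_mat T \<Longrightarrow> finite Y \<Longrightarrow> (\<Sum>y\<in>Y. (cmod (T y z))\<^sup>2) \<le> (op_norm T)\<^sup>2"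
  using sum_sq_norm_mat_vec_le[of T Y "{z}" "\<lambda>_. 1"] by simp

lemma l2_product_summable:
  fixes a b :: "'x \<Rightarrow> complex"
  assumes A: "\<And>Y. finite Y \<Longrightarrow> (\<Sum>y\<in>Y. (cmod (a y))\<^sup>2) \<le> Ma"
    and B: "\<And>Y. finite Y \<Longrightarrow> (\<Sum>y\<in>Y. (cmod (b y))\<^sup>2) \<le> Mb"
  shows "(\<lambda>y. norm (a y * b y)) summable_on UNIV" "cmod (\<Sum>\<^sub>\<infinity>y. a y * b y) \<le> sqrt Ma * sqrt Mb"
proof -
  have bound: "(\<Sum>y\<in>Y. norm (a y * b y)) \<le> sqrt Ma * sqrt Mb" if Y: "finite Y" for Y
  proof -
    have "(\<Sum>y\<in>Y. norm (a y * b y)) \<le> l2_on Y a * l2_on Y b"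
      using L2_set_mult_ineq[where f="\<lambda>y. cmod (a y)" and g="\<lambda>y. cmod (b y)" and A=Y]
      by (simp add: norm_mult)
    also have "\<dots> \<le> sqrt Ma * sqrt Mb"
      unfolding L2_set_def using A[OF Y] B[OF Y] A[of "{}"]
      by (intro mult_mono real_sqrt_le_mono) (auto simp: sum_nonneg)
    finally show ?thesis .
  qed
  show abs: "(\<lambda>y. norm (a y * b y)) summable_on UNIV"
    by (rule nonneg_bdd_above_summable_on) (auto intro!: bdd_aboveI[where M="sqrt Ma * sqrt Mb"] bound)
  have "cmod (\<Sum>\<^sub>\<infinity>y. a y * b y) \<le> (\<Sum>\<^sub>\<infinity>y. norm (a y * b y))"
    by (rule norm_infsum_bound[OF abs])
  also have "\<dots> \<le> sqrt Ma * sqrt Mb"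
    by (rule infsum_le_finite_sums[OF abs]) (rule bound)
  finally show "cmod (\<Sum>\<^sub>\<infinity>y. a y * b y) \<le> sqrt Ma * sqrt Mb" .
qed

lemma infsum_finite_sum:
  fixes f :: "'z \<Rightarrow> 'y \<Rightarrow> 'b::{topological_comm_monoid_add, t2_space}"
  assumes "finite Z" "\<And>z. z \<in> Z \<Longrightarrow> f z summable_on A"
  shows "(\<lambda>y. \<Sum>z\<in>Z. f z y) summable_on A \<and> (\<Sum>\<^sub>\<infinity>y\<in>A. \<Sum>z\<in>Z. f z y) = (\<Sum>z\<in>Z. \<Sum>\<^sub>\<infinity>y\<in>A. f z y)"
  using assms
proof (induction Z rule: finite_induct)
  case (insert z Z)
  then have "f z summable_on A" "(\<lambda>y. \<Sum>z\<in>Z. f z y) summable_on A" by auto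
  then show ?case using insert by (simp add: infsum_add summable_on_add)
qed simp

lemma mat_mult_summable:
  assumes "bounded_mat A" "bounded_mat B"
  shows "(\<lambda>y. A x y * B y z) summable_on UNIV"
proof -
  have "(\<lambda>y. norm (A x y * B y z)) summable_on UNIV"
    using assms by (intro l2_product_summable(1)[where Ma="(op_norm A)\<^sup>2" and Mb="(op_norm B)\<^sup>2"]
        sum_sq_norm_row_le sum_sq_norm_col_le)
  then show ?thesis by (rule abs_summable_summable)
qed

lemma sum_sq_norm_infsum_vec_mat_le:
  assumes T: "bounded_mat T" and v: "\<And>Y. finite Y \<Longrightarrow> (\<Sum>y\<in>Y. (cmod (v y))\<^sup>2) \<le> M"
    and Z: "finite Z"
  shows "(\<Sum>z\<in>Z. (cmod (\<Sum>\<^sub>\<infinity>y. v y * T y z))\<^sup>2) \<le> (op_norm T)\<^sup>2 * M"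
proof -
  have M: "M \<ge> 0" using v[of "{}"] by simp
  have summable: "(\<lambda>y. v y * T y z) summable_on UNIV" for z
    using l2_product_summable(1)[OF v sum_sq_norm_col_le[OF T]] by (rule abs_summable_summable)
  define w where "w z = (\<Sum>\<^sub>\<infinity>y. v y * T y z)" for z
  define S where "S = (\<Sum>z\<in>Z. (cmod (w z))\<^sup>2)"
  have S0: "S \<ge> 0" unfolding S_def by (simp add: sum_nonneg)
  define b where "b y = (\<Sum>z\<in>Z. T y z * cnj (w z))" for y
  have "complex_of_real S = (\<Sum>z\<in>Z. \<Sum>\<^sub>\<infinity>y. v y * T y z * cnj (w z))"
    unfolding S_def of_real_sum
    by (intro sum.cong refl) (simp add: infsum_cmult_left' w_def flip: complex_norm_square)
  also have "\<dots> = (\<Sum>\<^sub>\<infinity>y. \<Sum>z\<in>Z. v y * T y z * cnj (w z))"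
    using infsum_finite_sum[OF Z, of "\<lambda>z y. v y * T y z * cnj (w z)" UNIV]
      summable_on_cmult_left[OF summable] by simp
  also have "\<dots> = (\<Sum>\<^sub>\<infinity>y. v y * b y)"
    unfolding b_def by (simp add: sum_distrib_left mult.assoc)
  finally have e: "complex_of_real S = (\<Sum>\<^sub>\<infinity>y. v y * b y)" .
  have b: "(\<Sum>y\<in>Y. (cmod (b y))\<^sup>2) \<le> (op_norm T)\<^sup>2 * S" if "finite Y" for Y
    using sum_sq_norm_mat_vec_le[OF T that Z, of "\<lambda>z. cnj (w z)"] unfolding b_def S_def by simp
  have "cmod (\<Sum>\<^sub>\<infinity>y. v y * b y) \<le> sqrt M * sqrt ((op_norm T)\<^sup>2 * S)"
    using l2_product_summable(2)[OF v b] .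
  then have "S \<le> sqrt M * sqrt ((op_norm T)\<^sup>2 * S)" using e[symmetric] S0 by simp
  also have "\<dots> = (op_norm T * sqrt M) * sqrt S"
    using op_norm_nonneg[OF T] by (simp add: real_sqrt_mult)
  finally have "S \<le> (op_norm T * sqrt M)\<^sup>2"
    using S0 op_norm_nonneg[OF T] M by (intro le_sq_of_le_mult_sqrt) auto
  then show ?thesis using M unfolding S_def w_def by (simp add: power_mult_distrib)
qed

lemma mat_diff_eq_add_scale: "mat_diff A B = mat_add A (mat_scale (-1) B)"
  by (simp add: fun_eq_iff mat_diff_def mat_add_def mat_scale_def)

lemma bounded_add:
  fixes A B :: "'x mat"
  assumes A: "bounded_mat A" and B: "bounded_mat B"
  shows "bounded_mat (mat_add A B)"
proof (rule bounded_matI(1))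
  fix U V :: "'x set" and u v assume UV: "finite U" "finite V"
  have "cmod (sesq_form (mat_add A B) U V u v) \<le> cmod (sesq_form A U V u v) + cmod (sesq_form B U V u v)"
    unfolding sesq_form_add by (rule norm_triangle_ineq)
  also have "\<dots> \<le> (op_norm A + op_norm B) * l2_on U u * l2_on V v"
    using add_mono[OF norm_sesq_form_le[OF A UV, of u v] norm_sesq_form_le[OF B UV, of u v]]
    by (simp add: algebra_simps)
  finally show "cmod (sesq_form (mat_add A B) U V u v) \<le> (op_norm A + op_norm B) * l2_on U u * l2_on V v" .
qed (simp add: A B op_norm_nonneg)

lemma bounded_scale:
  fixes A :: "'x mat"
  assumes A: "bounded_mat A"
  shows "bounded_mat (mat_scale c A)"
proof (rule bounded_matI(1))
  fix U V :: "'x set" and u v assume UV: "finite U" "finite V"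
  show "cmod (sesq_form (mat_scale c A) U V u v) \<le> (cmod c * op_norm A) * l2_on U u * l2_on V v"
    using mult_left_mono[OF norm_sesq_form_le[OF A UV, of u v], of "cmod c"]
    by (simp add: sesq_form_scale norm_mult mult.assoc)
qed (simp add: A op_norm_nonneg)

lemma bounded_diff: "bounded_mat A \<Longrightarrow> bounded_mat B \<Longrightarrow> bounded_mat (mat_diff A B)"
  unfolding mat_diff_eq_add_scale by (intro bounded_add bounded_scale)

lemma bounded_adj:
  fixes A :: "'x mat"
  assumes A: "bounded_mat A"
  shows "bounded_mat (mat_adj A)" "op_norm (mat_adj A) \<le> op_norm A"
proof -
  have "cmod (sesq_form (mat_adj A) U V u v) \<le> op_norm A * l2_on U u * l2_on V v"
    if "finite U" "finite V" for U V :: "'x set" and u v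
    using norm_sesq_form_le[OF A that(2,1), of v u] by (simp add: sesq_form_adj ac_simps)
  note form = this
  show "bounded_mat (mat_adj A)" by (rule bounded_matI(1)[OF op_norm_nonneg[OF A] form])
  show "op_norm (mat_adj A) \<le> op_norm A" by (rule bounded_matI(2)[OF op_norm_nonneg[OF A] form])
qed

lemma mat_adj_adj: "mat_adj (mat_adj A) = A"
  unfolding mat_adj_def by simp

lemma op_norm_adj: "bounded_mat A \<Longrightarrow> op_norm (mat_adj A) = op_norm A"
  using bounded_adj[of A] bounded_adj[of "mat_adj A"] mat_adj_adj[of A] by force

text \<open>The form of a product is an absolutely convergent l2 pairing of the vectors u* A and
  B v, whose l2 norms are controlled by the finite-section bounds.\<close>
lemma bounded_mult:
  fixes A B :: "'x mat"
  assumes A: "bounded_mat A" and B: "bounded_mat B"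
  shows "bounded_mat (mat_mult A B)"
proof (rule bounded_matI(1))
  fix U V :: "'x set" and u v assume U: "finite U" and V: "finite V"
  define a where "a y = (\<Sum>x\<in>U. cnj (u x) * A x y)" for y
  define b where "b y = (\<Sum>z\<in>V. B y z * v z)" for y
  have inner: "(\<lambda>y. \<Sum>z\<in>V. cnj (u x) * (A x y * B y z) * v z) summable_on UNIV \<and>
      (\<Sum>\<^sub>\<infinity>y. \<Sum>z\<in>V. cnj (u x) * (A x y * B y z) * v z) = (\<Sum>z\<in>V. \<Sum>\<^sub>\<infinity>y. cnj (u x) * (A x y * B y z) * v z)"
    for x
    by (intro infsum_finite_sum[OF V] summable_on_cmult_left summable_on_cmult_right
        mat_mult_summable[OF A B])
  have "sesq_form (mat_mult A B) U V u v = (\<Sum>x\<in>U. \<Sum>z\<in>V. \<Sum>\<^sub>\<infinity>y. cnj (u x) * (A x y * B y z) * v z)"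
    unfolding sesq_form_def mat_mult_def
    by (intro sum.cong refl) (simp add: infsum_cmult_left' infsum_cmult_right')
  also have "\<dots> = (\<Sum>\<^sub>\<infinity>y. \<Sum>x\<in>U. \<Sum>z\<in>V. cnj (u x) * (A x y * B y z) * v z)"
    using inner infsum_finite_sum[OF U, of "\<lambda>x y. \<Sum>z\<in>V. cnj (u x) * (A x y * B y z) * v z" UNIV]
    by simp
  also have "\<dots> = (\<Sum>\<^sub>\<infinity>y. a y * b y)"
    unfolding a_def b_def by (intro infsum_cong) (simp add: sum_product algebra_simps sum.swap[of _ V U])
  finally have "cmod (sesq_form (mat_mult A B) U V u v) = cmod (\<Sum>\<^sub>\<infinity>y. a y * b y)" by simp
  also have "\<dots> \<le> sqrt ((op_norm A)\<^sup>2 * (l2_on U u)\<^sup>2) * sqrt ((op_norm B)\<^sup>2 * (l2_on V v)\<^sup>2)"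
    using sum_sq_norm_vec_mat_le[OF A U] sum_sq_norm_mat_vec_le[OF B _ V]
    unfolding a_def b_def l2_on_squared by (intro l2_product_summable(2))
  also have "\<dots> = (op_norm A * op_norm B) * l2_on U u * l2_on V v"
    using op_norm_nonneg[OF A] op_norm_nonneg[OF B] by (simp add: real_sqrt_mult)
  finally show "cmod (sesq_form (mat_mult A B) U V u v) \<le> (op_norm A * op_norm B) * l2_on U u * l2_on V v" .
qed (simp add: A B op_norm_nonneg)

lemma bounded_mult_op:
  fixes f :: "'x \<Rightarrow> complex"
  assumes f: "\<And>x. cmod (f x) \<le> C"
  shows "bounded_mat (mult_op f)"
proof (rule bounded_matI(1))
  show C: "C \<ge> 0" using f[of undefined] norm_ge_zero order_trans by blast
  fix U V :: "'x set" and u v assume U: "finite U" and V: "finite V"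
  have "(\<Sum>y\<in>V. cnj (u x) * mult_op f x y * v y) = (if x \<in> V then cnj (u x) * f x * v x else 0)" for x
  proof -
    have "(\<Sum>y\<in>V. cnj (u x) * mult_op f x y * v y) = (\<Sum>y\<in>V. if y = x then cnj (u x) * f x * v x else 0)"
      by (rule sum.cong) (auto simp: mult_op_def)
    then show ?thesis using V by simp
  qed
  then have "sesq_form (mult_op f) U V u v = (\<Sum>x\<in>U. if x \<in> V then cnj (u x) * f x * v x else 0)"
    unfolding sesq_form_def by simp
  also have "\<dots> = (\<Sum>x\<in>U \<inter> V. cnj (u x) * f x * v x)"
    by (rule sum.inter_restrict[OF U, symmetric])
  finally have "cmod (sesq_form (mult_op f) U V u v) \<le> (\<Sum>x\<in>U \<inter> V. cmod (u x) * cmod (f x) * cmod (v x))"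
    by (simp add: order_trans[OF norm_sum] norm_mult)
  also have "\<dots> \<le> (\<Sum>x\<in>U \<inter> V. C * (cmod (u x) * cmod (v x)))"
    using f by (intro sum_mono) (simp add: mult_right_mono mult_left_mono ac_simps)
  also have "\<dots> \<le> C * (l2_on (U \<inter> V) u * l2_on (U \<inter> V) v)"
    using C L2_set_mult_ineq[where f="\<lambda>x. cmod (u x)" and g="\<lambda>x. cmod (v x)" and A="U \<inter> V"]
    by (simp add: sum_distrib_left[symmetric] mult_left_mono)
  also have "\<dots> \<le> C * (l2_on U u * l2_on V v)"
    using C U V by (intro mult_left_mono mult_mono l2_on_mono) auto
  finally show "cmod (sesq_form (mult_op f) U V u v) \<le> C * l2_on U u * l2_on V v"
    by (simp add: mult.assoc)
qed

lemma sesq_form_partial_bij_mat: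
  assumes U: "finite U" and V: "finite V"
  shows "sesq_form (\<lambda>y x. if g x = Some y then 1 else 0) U V u v
    = (\<Sum>x\<in>{x\<in>V. \<exists>y\<in>U. g x = Some y}. cnj (u (the (g x))) * v x)"
proof -
  define M where "M = (\<lambda>y x. if g x = Some y then (1::complex) else 0)"
  define V' where "V' = {x\<in>V. \<exists>y\<in>U. g x = Some y}"
  have "(\<Sum>y\<in>U. cnj (u y) * M y x * v x) = (if x \<in> V' then cnj (u (the (g x))) * v x else 0)"
    if x: "x \<in> V" for x
  proof (cases "x \<in> V'")
    case True
    then obtain y where y: "y \<in> U" "g x = Some y" unfolding V'_def by auto
    have "(\<Sum>y'\<in>U. cnj (u y') * M y' x * v x) = (\<Sum>y'\<in>U. if y' = y then cnj (u y) * v x else 0)"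
      by (intro sum.cong refl) (auto simp: M_def y(2))
    also have "\<dots> = cnj (u y) * v x" using y(1) U by simp
    finally show ?thesis using True y(2) by simp
  next
    case False
    then have "\<forall>y\<in>U. g x \<noteq> Some y" using x unfolding V'_def by auto
    then show ?thesis using False unfolding M_def by (auto intro!: sum.neutral)
  qed
  then have "sesq_form M U V u v = (\<Sum>x\<in>V. if x \<in> V' then cnj (u (the (g x))) * v x else 0)"
    unfolding sesq_form_def by (subst sum.swap) simp
  also have "\<dots> = (\<Sum>x\<in>V'. cnj (u (the (g x))) * v x)"
    by (rule sum.mono_neutral_cong_right[OF V]) (auto simp: V'_def)
  finally show ?thesis unfolding M_def V'_def .
qed

lemma bounded_partial_bij_mat:
  fixes g :: "'x \<rightharpoonup> 'x"
  assumes g: "inj_on g (dom g)"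
  shows "bounded_mat (\<lambda>y x. if g x = Some y then 1 else 0)"
proof (rule bounded_matI(1)[of 1])
  fix U V :: "'x set" and u v assume U: "finite U" and V: "finite V"
  define V' where "V' = {x\<in>V. \<exists>y\<in>U. g x = Some y}"
  define h where "h x = the (g x)" for x
  have sub: "h ` V' \<subseteq> U" "V' \<subseteq> V" unfolding V'_def h_def by auto
  have "cmod (sesq_form (\<lambda>y x. if g x = Some y then 1 else 0) U V u v) \<le> (\<Sum>x\<in>V'. cmod (u (h x)) * cmod (v x))"
    unfolding sesq_form_partial_bij_mat[OF U V] V'_def h_def
    by (auto intro: order_trans[OF norm_sum] simp: norm_mult)
  also have "\<dots> \<le> l2_on V' (\<lambda>x. u (h x)) * l2_on V' v"
    using L2_set_mult_ineq[where f="\<lambda>x. cmod (u (h x))" and g="\<lambda>x. cmod (v x)" and A=V'] by simp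
  also have "l2_on V' (\<lambda>x. u (h x)) = l2_on (h ` V') u"
  proof -
    have "inj_on h V'"
    proof (rule inj_onI)
      fix x x' assume "x \<in> V'" "x' \<in> V'" "h x = h x'"
      then have "g x = g x'" "x \<in> dom g" "x' \<in> dom g" unfolding V'_def h_def by auto
      then show "x = x'" using inj_onD[OF g] by blast
    qed
    then show ?thesis unfolding L2_set_def by (simp add: sum.reindex)
  qed
  also have "l2_on (h ` V') u * l2_on V' v \<le> 1 * l2_on U u * l2_on V v"
    using l2_on_mono[OF U sub(1), of u] l2_on_mono[OF V sub(2), of v] by (auto intro: mult_mono)
  finally show "cmod (sesq_form (\<lambda>y x. if g x = Some y then 1 else 0) U V u v) \<le> 1 * l2_on U u * l2_on V v" .
qed simp

section \<open>Mass of a matrix across the boundary of a set\<close>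

definition crossing :: "'x set \<Rightarrow> ('x \<times> 'x) set" where
  "crossing A = {p. (fst p \<in> A) \<noteq> (snd p \<in> A)}"

text \<open>For P the multiplication by the indicator of A, the squared Hilbert-Schmidt norm of
  the commutator [P, T] is the l2 mass of T on the crossing entries; crossing_bound A T B
  bounds that mass by B through finite sums, so that no summability is needed.\<close>
definition crossing_bound :: "'x set \<Rightarrow> 'x mat \<Rightarrow> real \<Rightarrow> bool" where
  "crossing_bound A T B \<longleftrightarrow>
     (\<forall>W. finite W \<longrightarrow> W \<subseteq> crossing A \<longrightarrow> (\<Sum>p\<in>W. (cmod (T (fst p) (snd p)))\<^sup>2) \<le> B)"

lemma crossing_boundD:
  "crossing_bound A T B \<Longrightarrow> finite W \<Longrightarrow> W \<subseteq> crossing A \<Longrightarrow> (\<Sum>p\<in>W. (cmod (T (fst p) (snd p)))\<^sup>2) \<le> B"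
  unfolding crossing_bound_def by blast

lemma crossing_bound_mono: "crossing_bound A T B \<Longrightarrow> B \<le> B' \<Longrightarrow> crossing_bound A T B'"
  unfolding crossing_bound_def by (meson order_trans)

lemma square_add_le: "(a + b)\<^sup>2 \<le> 2 * a\<^sup>2 + 2 * (b::real)\<^sup>2"
  using zero_le_power2[of "a - b"] by (simp add: power2_eq_square algebra_simps)

lemma crossing_bound_triangle:
  assumes K: "\<And>x z. cmod (K x z) \<le> cmod (F x z) + cmod (E x z)"
    and F: "crossing_bound A F B1" and E: "crossing_bound A E B2"
  shows "crossing_bound A K (2 * B1 + 2 * B2)"
  unfolding crossing_bound_def
proof (intro allI impI)
  fix W assume W: "finite W" "W \<subseteq> crossing A"
  have "(cmod (K x z))\<^sup>2 \<le> (cmod (F x z) + cmod (E x z))\<^sup>2" for x z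
    using K by (intro power_mono) auto
  then have "(cmod (K x z))\<^sup>2 \<le> 2 * (cmod (F x z))\<^sup>2 + 2 * (cmod (E x z))\<^sup>2" for x z
    using square_add_le order_trans by blast
  then have "(\<Sum>p\<in>W. (cmod (K (fst p) (snd p)))\<^sup>2)
      \<le> 2 * (\<Sum>p\<in>W. (cmod (F (fst p) (snd p)))\<^sup>2) + 2 * (\<Sum>p\<in>W. (cmod (E (fst p) (snd p)))\<^sup>2)"
    by (simp add: sum_distrib_left sum.distrib[symmetric] sum_mono)
  also have "\<dots> \<le> 2 * B1 + 2 * B2" using crossing_boundD[OF F W] crossing_boundD[OF E W] by simp
  finally show "(\<Sum>p\<in>W. (cmod (K (fst p) (snd p)))\<^sup>2) \<le> 2 * B1 + 2 * B2" .
qed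

lemma crossing_bound_scale:
  assumes "crossing_bound A T B"
  shows "crossing_bound A (mat_scale c T) ((cmod c)\<^sup>2 * B)"
  unfolding crossing_bound_def
proof (intro allI impI)
  fix W assume W: "finite W" "W \<subseteq> crossing A"
  have "(\<Sum>p\<in>W. (cmod (mat_scale c T (fst p) (snd p)))\<^sup>2) = (cmod c)\<^sup>2 * (\<Sum>p\<in>W. (cmod (T (fst p) (snd p)))\<^sup>2)"
    unfolding mat_scale_def by (simp add: norm_mult power_mult_distrib sum_distrib_left)
  also have "\<dots> \<le> (cmod c)\<^sup>2 * B" using crossing_boundD[OF assms W] by (intro mult_left_mono) auto
  finally show "(\<Sum>p\<in>W. (cmod (mat_scale c T (fst p) (snd p)))\<^sup>2) \<le> (cmod c)\<^sup>2 * B" .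
qed

lemma crossing_bound_adj:
  assumes "crossing_bound A T B"
  shows "crossing_bound A (mat_adj T) B"
  unfolding crossing_bound_def
proof (intro allI impI)
  fix W assume W: "finite W" "W \<subseteq> crossing A"
  have "(\<Sum>p\<in>W. (cmod (mat_adj T (fst p) (snd p)))\<^sup>2) = (\<Sum>p\<in>prod.swap ` W. (cmod (T (fst p) (snd p)))\<^sup>2)"
    unfolding mat_adj_def by (subst sum.reindex) (auto simp: inj_on_def)
  also have "\<dots> \<le> B" using W by (intro crossing_boundD[OF assms]) (auto simp: crossing_def)
  finally show "(\<Sum>p\<in>W. (cmod (mat_adj T (fst p) (snd p)))\<^sup>2) \<le> B" .
qed

lemma crossing_bound_bounded:
  assumes A: "finite A" and E: "bounded_mat E"
  shows "crossing_bound A E (2 * card A * (op_norm E)\<^sup>2)"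
  unfolding crossing_bound_def
proof (intro allI impI)
  fix W assume W: "finite W" "W \<subseteq> crossing A"
  define X where "X = fst ` W"
  define Z where "Z = snd ` W"
  have fin: "finite X" "finite Z" using W unfolding Z_def X_def by auto
  let ?f = "\<lambda>p. (cmod (E (fst p) (snd p)))\<^sup>2"
  have "sum ?f W \<le> sum ?f (A \<times> Z \<union> X \<times> A)"
    using W fin A unfolding crossing_def Z_def X_def by (intro sum_mono2) force+
  also have "\<dots> \<le> sum ?f (A \<times> Z) + sum ?f (X \<times> A)"
    using sum_Un[of "A \<times> Z" "X \<times> A" ?f] sum_nonneg[of "A \<times> Z \<inter> X \<times> A" ?f] fin A by simp
  also have "sum ?f (A \<times> Z) = (\<Sum>x\<in>A. \<Sum>z\<in>Z. (cmod (E x z))\<^sup>2)"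
    by (simp add: sum.cartesian_product case_prod_unfold)
  also have "\<dots> \<le> (\<Sum>x\<in>A. (op_norm E)\<^sup>2)"
    using sum_sq_norm_row_le[OF E fin(2)] by (intro sum_mono) auto
  also have "sum ?f (X \<times> A) = (\<Sum>x\<in>X. \<Sum>z\<in>A. (cmod (E x z))\<^sup>2)"
    by (simp add: sum.cartesian_product case_prod_unfold)
  also have "\<dots> = (\<Sum>z\<in>A. \<Sum>x\<in>X. (cmod (E x z))\<^sup>2)"
    by (rule sum.swap)
  also have "\<dots> \<le> (\<Sum>z\<in>A. (op_norm E)\<^sup>2)"
    using sum_sq_norm_col_le[OF E fin(1)] by (intro sum_mono) auto
  finally show "sum ?f W \<le> 2 * card A * (op_norm E)\<^sup>2" by simp
qed

lemma crossing_bound_mult_op: "crossing_bound A (mult_op f) 0"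
  unfolding crossing_bound_def mult_op_def crossing_def by (auto intro!: sum_nonpos)

lemma crossing_bound_partial_bij_mat:
  assumes g: "inj_on g (dom g)" and A: "finite A"
  shows "crossing_bound A (\<lambda>y x. if g x = Some y then 1 else 0) (card (map_boundary g A))"
  unfolding crossing_bound_def
proof (intro allI impI)
  fix W assume W: "finite W" "W \<subseteq> crossing A"
  define W' where "W' = {p\<in>W. g (snd p) = Some (fst p)}"
  have "(\<Sum>p\<in>W. (cmod (if g (snd p) = Some (fst p) then (1::complex) else 0))\<^sup>2)
      = (\<Sum>p\<in>W. if g (snd p) = Some (fst p) then 1 else 0)"
    by (intro sum.cong refl) auto
  also have "\<dots> = card W'"
    using sum.inter_filter[OF W(1), of "\<lambda>_. 1::real"] unfolding W'_def by simp
  also have "card W' \<le> card (map_boundary g A)"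
  proof (rule card_inj_on_le)
    show "inj_on snd W'" unfolding W'_def inj_on_def by (auto simp: prod_eq_iff)
    show "snd ` W' \<subseteq> map_boundary g A" using W(2) unfolding W'_def map_boundary_def crossing_def by force
  qed (rule finite_map_boundary[OF g A])
  finally show "(\<Sum>p\<in>W. (cmod (if g (snd p) = Some (fst p) then (1::complex) else 0))\<^sup>2) \<le> card (map_boundary g A)"
    by simp
qed

lemma mat_mult_split:
  assumes T1: "bounded_mat T1" and T2: "bounded_mat T2" and A: "finite A"
  shows "mat_mult T1 T2 x z = (\<Sum>\<^sub>\<infinity>y. (if y \<in> A then 0 else T1 x y) * T2 y z) + (\<Sum>y\<in>A. T1 x y * T2 y z)"
proof -
  define g where "g y = T1 x y * T2 y z" for y
  have outside: "(\<lambda>y. (if y \<in> A then 0 else T1 x y) * T2 y z) summable_on UNIV"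
    using summable_on_cong_neutral[of "-A" UNIV g] mat_mult_summable[OF T1 T2, of x z]
      summable_on_subset_banach[of g UNIV "-A"] unfolding g_def by (auto simp: if_distrib if_distribR)
  have inside: "(\<lambda>y. if y \<in> A then g y else 0) summable_on UNIV"
    "(\<Sum>\<^sub>\<infinity>y. if y \<in> A then g y else 0) = (\<Sum>y\<in>A. g y)"
    using summable_on_cong_neutral[of A UNIV g] infsum_cong_neutral[of A UNIV g] A by simp_all
  have "mat_mult T1 T2 x z = (\<Sum>\<^sub>\<infinity>y. (if y \<in> A then 0 else T1 x y) * T2 y z + (if y \<in> A then g y else 0))"
    unfolding mat_mult_def g_def by (intro infsum_cong) simp
  also have "\<dots> = (\<Sum>\<^sub>\<infinity>y. (if y \<in> A then 0 else T1 x y) * T2 y z) + (\<Sum>y\<in>A. T1 x y * T2 y z)"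
    using infsum_add[OF outside inside(1)] inside(2) unfolding g_def by simp
  finally show ?thesis .
qed

lemma summable_sq_norm_row_outside:
  assumes T: "bounded_mat T"
  shows "(\<lambda>y. (cmod (if y \<in> A then 0 else T x y))\<^sup>2) summable_on UNIV"
proof (rule nonneg_bdd_above_summable_on)
  have "(\<Sum>y\<in>Y. (cmod (if y \<in> A then 0 else T x y))\<^sup>2) \<le> (op_norm T)\<^sup>2" if "finite Y" for Y
  proof -
    have "(\<Sum>y\<in>Y. (cmod (if y \<in> A then 0 else T x y))\<^sup>2) \<le> (\<Sum>y\<in>Y. (cmod (T x y))\<^sup>2)"
      by (intro sum_mono) auto
    then show ?thesis using sum_sq_norm_row_le[OF T that, of x] by linarith
  qed
  then show "bdd_above (sum (\<lambda>y. (cmod (if y \<in> A then 0 else T x y))\<^sup>2) ` {F. F \<subseteq> UNIV \<and> finite F})"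
    by (auto intro!: bdd_aboveI[where M="(op_norm T)\<^sup>2"])
qed simp

lemma crossing_bound_row_mass_outside:
  assumes T: "bounded_mat T" and c: "crossing_bound A T B" and X: "finite X" "X \<subseteq> A"
  shows "(\<Sum>x\<in>X. \<Sum>\<^sub>\<infinity>y. (cmod (if y \<in> A then 0 else T x y))\<^sup>2) \<le> B"
proof -
  define r where "r x y = (if y \<in> A then 0 else T x y)" for x y
  have summable: "(\<lambda>y. \<Sum>x\<in>X. (cmod (r x y))\<^sup>2) summable_on UNIV"
    and sum_eq: "(\<Sum>x\<in>X. \<Sum>\<^sub>\<infinity>y. (cmod (r x y))\<^sup>2) = (\<Sum>\<^sub>\<infinity>y. \<Sum>x\<in>X. (cmod (r x y))\<^sup>2)"
    using infsum_finite_sum[OF X(1), of "\<lambda>x y. (cmod (r x y))\<^sup>2" UNIV]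
      summable_sq_norm_row_outside[OF T] unfolding r_def by simp_all
  have "(\<Sum>\<^sub>\<infinity>y. \<Sum>x\<in>X. (cmod (r x y))\<^sup>2) \<le> B"
  proof (rule infsum_le_finite_sums[OF summable])
    fix Y :: "'a set" assume Y: "finite Y" "Y \<subseteq> UNIV"
    have "(\<Sum>y\<in>Y - A. (cmod (T x y))\<^sup>2) = (\<Sum>y\<in>Y. (cmod (r x y))\<^sup>2)" for x
      using Y(1) by (intro sum.mono_neutral_cong_left) (auto simp: r_def)
    then have "(\<Sum>y\<in>Y. \<Sum>x\<in>X. (cmod (r x y))\<^sup>2) = (\<Sum>x\<in>X. \<Sum>y\<in>Y - A. (cmod (T x y))\<^sup>2)"
      by (simp add: sum.swap[of _ Y])
    also have "\<dots> = (\<Sum>p\<in>X \<times> (Y - A). (cmod (T (fst p) (snd p)))\<^sup>2)"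
      by (simp add: sum.cartesian_product case_prod_unfold)
    also have "\<dots> \<le> B"
      using X Y by (intro crossing_boundD[OF c]) (auto simp: crossing_def)
    finally show "(\<Sum>y\<in>Y. \<Sum>x\<in>X. (cmod (r x y))\<^sup>2) \<le> B" .
  qed
  then show ?thesis using sum_eq unfolding r_def by simp
qed

lemma crossing_mass_mult_via_outside:
  assumes T1: "bounded_mat T1" and T2: "bounded_mat T2" and c1: "crossing_bound A T1 B1"
    and X: "finite X" "X \<subseteq> A" and Z: "finite Z"
  shows "(\<Sum>x\<in>X. \<Sum>z\<in>Z. (cmod (\<Sum>\<^sub>\<infinity>y. (if y \<in> A then 0 else T1 x y) * T2 y z))\<^sup>2) \<le> (op_norm T2)\<^sup>2 * B1"
proof -
  define M where "M x = (\<Sum>\<^sub>\<infinity>y. (cmod (if y \<in> A then 0 else T1 x y))\<^sup>2)" for x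
  have "(\<Sum>z\<in>Z. (cmod (\<Sum>\<^sub>\<infinity>y. (if y \<in> A then 0 else T1 x y) * T2 y z))\<^sup>2) \<le> (op_norm T2)\<^sup>2 * M x" for x
  proof (rule sum_sq_norm_infsum_vec_mat_le[OF T2 _ Z])
    show "(\<Sum>y\<in>Y. (cmod (if y \<in> A then 0 else T1 x y))\<^sup>2) \<le> M x" if "finite Y" for Y
      unfolding M_def using that by (intro finite_sum_le_infsum[OF summable_sq_norm_row_outside[OF T1]]) auto
  qed
  then have "(\<Sum>x\<in>X. \<Sum>z\<in>Z. (cmod (\<Sum>\<^sub>\<infinity>y. (if y \<in> A then 0 else T1 x y) * T2 y z))\<^sup>2)
      \<le> (op_norm T2)\<^sup>2 * (\<Sum>x\<in>X. M x)"
    by (simp add: sum_distrib_left sum_mono)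
  also have "\<dots> \<le> (op_norm T2)\<^sup>2 * B1"
    using crossing_bound_row_mass_outside[OF T1 c1 X] unfolding M_def by (intro mult_left_mono) auto
  finally show ?thesis .
qed

lemma crossing_mass_mult_via_inside:
  assumes T1: "bounded_mat T1" and A: "finite A" and c2: "crossing_bound A T2 B2"
    and X: "finite X" and Z: "finite Z" "Z \<inter> A = {}"
  shows "(\<Sum>x\<in>X. \<Sum>z\<in>Z. (cmod (\<Sum>y\<in>A. T1 x y * T2 y z))\<^sup>2) \<le> (op_norm T1)\<^sup>2 * B2"
proof -
  have "(\<Sum>x\<in>X. \<Sum>z\<in>Z. (cmod (\<Sum>y\<in>A. T1 x y * T2 y z))\<^sup>2)
      = (\<Sum>z\<in>Z. \<Sum>x\<in>X. (cmod (\<Sum>y\<in>A. T1 x y * T2 y z))\<^sup>2)"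
    by (rule sum.swap)
  also have "\<dots> \<le> (\<Sum>z\<in>Z. (op_norm T1)\<^sup>2 * (\<Sum>y\<in>A. (cmod (T2 y z))\<^sup>2))"
    by (intro sum_mono sum_sq_norm_mat_vec_le[OF T1 X A])
  also have "\<dots> = (op_norm T1)\<^sup>2 * (\<Sum>y\<in>A. \<Sum>z\<in>Z. (cmod (T2 y z))\<^sup>2)"
    by (simp add: sum_distrib_left sum.swap[of _ Z])
  also have "\<dots> = (op_norm T1)\<^sup>2 * (\<Sum>p\<in>A \<times> Z. (cmod (T2 (fst p) (snd p)))\<^sup>2)"
    by (simp add: sum.cartesian_product case_prod_unfold)
  also have "\<dots> \<le> (op_norm T1)\<^sup>2 * B2"
    using Z A by (intro mult_left_mono crossing_boundD[OF c2]) (auto simp: crossing_def)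
  finally show ?thesis .
qed

text \<open>On entries from A to its complement, T1 T2 splits at the middle index into a part
  crossing in T1 and a part crossing in T2.\<close>
lemma crossing_mass_mult_out_of:
  assumes T1: "bounded_mat T1" and T2: "bounded_mat T2" and A: "finite A"
    and c1: "crossing_bound A T1 B1" and c2: "crossing_bound A T2 B2"
    and W: "finite W" "\<And>p. p \<in> W \<Longrightarrow> fst p \<in> A \<and> snd p \<notin> A"
  shows "(\<Sum>p\<in>W. (cmod (mat_mult T1 T2 (fst p) (snd p)))\<^sup>2) \<le> 2 * ((op_norm T2)\<^sup>2 * B1 + (op_norm T1)\<^sup>2 * B2)"
proof -
  define X where "X = fst ` W"
  define Z where "Z = snd ` W"
  have XZ: "finite X" "X \<subseteq> A" "finite Z" "Z \<inter> A = {}"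
    using W unfolding X_def Z_def by auto
  define p where "p x z = (\<Sum>\<^sub>\<infinity>y. (if y \<in> A then 0 else T1 x y) * T2 y z)" for x z
  define q where "q x z = (\<Sum>y\<in>A. T1 x y * T2 y z)" for x z
  have "(cmod (mat_mult T1 T2 x z))\<^sup>2 \<le> (cmod (p x z) + cmod (q x z))\<^sup>2" for x z
    unfolding mat_mult_split[OF T1 T2 A] p_def q_def by (intro power_mono norm_triangle_ineq) auto
  then have entry: "(cmod (mat_mult T1 T2 x z))\<^sup>2 \<le> 2 * (cmod (p x z))\<^sup>2 + 2 * (cmod (q x z))\<^sup>2" for x z
    using square_add_le order_trans by blast
  have "(\<Sum>p\<in>W. (cmod (mat_mult T1 T2 (fst p) (snd p)))\<^sup>2)
      \<le> (\<Sum>p\<in>X \<times> Z. (cmod (mat_mult T1 T2 (fst p) (snd p)))\<^sup>2)"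
    using XZ W by (intro sum_mono2) (force simp: X_def Z_def)+
  also have "\<dots> = (\<Sum>x\<in>X. \<Sum>z\<in>Z. (cmod (mat_mult T1 T2 x z))\<^sup>2)"
    by (simp add: sum.cartesian_product case_prod_unfold)
  also have "\<dots> \<le> 2 * (\<Sum>x\<in>X. \<Sum>z\<in>Z. (cmod (p x z))\<^sup>2) + 2 * (\<Sum>x\<in>X. \<Sum>z\<in>Z. (cmod (q x z))\<^sup>2)"
    using entry by (simp add: sum_distrib_left sum.distrib[symmetric] sum_mono)
  also have "\<dots> \<le> 2 * ((op_norm T2)\<^sup>2 * B1 + (op_norm T1)\<^sup>2 * B2)"
    using crossing_mass_mult_via_outside[OF T1 T2 c1 XZ(1,2,3)] crossing_mass_mult_via_inside[OF T1 A c2 XZ(1,3,4)]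
    unfolding p_def q_def by simp
  finally show ?thesis .
qed

lemma mat_adj_mult: "mat_adj (mat_mult A B) = mat_mult (mat_adj B) (mat_adj A)"
  unfolding mat_adj_def mat_mult_def
  by (intro ext) (simp add: infsum_cnj[symmetric] mult.commute del: infsum_cnj)

text \<open>Entries from the complement into A are handled by the previous lemma applied to the
  adjoint (T1 T2)* = T2* T1*.\<close>
lemma crossing_bound_mult:
  assumes T1: "bounded_mat T1" and T2: "bounded_mat T2" and A: "finite A"
    and c1: "crossing_bound A T1 B1" and c2: "crossing_bound A T2 B2"
  shows "crossing_bound A (mat_mult T1 T2) (4 * ((op_norm T2)\<^sup>2 * B1 + (op_norm T1)\<^sup>2 * B2))"
  unfolding crossing_bound_def
proof (intro allI impI)
  fix W assume W: "finite W" "W \<subseteq> crossing A"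
  define W1 where "W1 = {p\<in>W. fst p \<in> A}"
  define W2 where "W2 = {p\<in>W. fst p \<notin> A}"
  have fin: "finite W1" "finite W2" using W unfolding W1_def W2_def by auto
  let ?g = "\<lambda>p. (cmod (mat_mult T1 T2 (fst p) (snd p)))\<^sup>2"
  have out_of: "sum ?g W1 \<le> 2 * ((op_norm T2)\<^sup>2 * B1 + (op_norm T1)\<^sup>2 * B2)"
    using W(2) by (intro crossing_mass_mult_out_of[OF T1 T2 A c1 c2 fin(1)]) (auto simp: W1_def crossing_def)
  have "sum ?g W2 = (\<Sum>p\<in>prod.swap ` W2. (cmod (mat_adj (mat_mult T1 T2) (fst p) (snd p)))\<^sup>2)"
    unfolding mat_adj_def by (subst sum.reindex) (auto simp: inj_on_def)
  also have "\<dots> = (\<Sum>p\<in>prod.swap ` W2. (cmod (mat_mult (mat_adj T2) (mat_adj T1) (fst p) (snd p)))\<^sup>2)"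
    unfolding mat_adj_mult ..
  also have "\<dots> \<le> 2 * ((op_norm (mat_adj T1))\<^sup>2 * B2 + (op_norm (mat_adj T2))\<^sup>2 * B1)"
    using W(2) fin(2)
    by (intro crossing_mass_mult_out_of[OF bounded_adj(1)[OF T2] bounded_adj(1)[OF T1] A
          crossing_bound_adj[OF c2] crossing_bound_adj[OF c1]])
       (auto simp: W2_def crossing_def)
  finally have into: "sum ?g W2 \<le> 2 * ((op_norm T2)\<^sup>2 * B1 + (op_norm T1)\<^sup>2 * B2)"
    using op_norm_adj[OF T1] op_norm_adj[OF T2] by simp
  have "W = W1 \<union> W2" "W1 \<inter> W2 = {}" unfolding W1_def W2_def by auto
  then have "sum ?g W = sum ?g W1 + sum ?g W2" using fin by (simp add: sum.union_disjoint)
  then show "sum ?g W \<le> 4 * ((op_norm T2)\<^sup>2 * B1 + (op_norm T1)\<^sup>2 * B2)" using out_of into by simp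
qed

section \<open>Operators almost commuting with the F{\o}lner projections\<close>

definition small_crossing :: "(nat \<Rightarrow> 'x set) \<Rightarrow> 'x mat \<Rightarrow> bool" where
  "small_crossing As T \<longleftrightarrow> bounded_mat T \<and>
     (\<forall>\<epsilon>::real>0. \<forall>\<^sub>F n in sequentially. crossing_bound (As n) T (\<epsilon> * card (As n)))"

lemma small_crossingD:
  "small_crossing As T \<Longrightarrow> (\<epsilon>::real) > 0 \<Longrightarrow> \<forall>\<^sub>F n in sequentially. crossing_bound (As n) T (\<epsilon> * card (As n))"
  unfolding small_crossing_def by blast

lemma small_crossing_bounded: "small_crossing As T \<Longrightarrow> bounded_mat T"
  unfolding small_crossing_def by blast

lemma small_crossing_add:
  assumes a: "small_crossing As a" and b: "small_crossing As b"
  shows "small_crossing As (mat_add a b)"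
  unfolding small_crossing_def
proof (intro conjI allI impI)
  show "bounded_mat (mat_add a b)"
    using a b by (intro bounded_add small_crossing_bounded)
  fix \<epsilon> :: real assume "\<epsilon> > 0"
  then have "\<epsilon>/4 > 0" by simp
  then have "\<forall>\<^sub>F n in sequentially. crossing_bound (As n) a (\<epsilon>/4 * card (As n)) \<and>
      crossing_bound (As n) b (\<epsilon>/4 * card (As n))"
    by (intro eventually_conj small_crossingD[OF a] small_crossingD[OF b])
  then show "\<forall>\<^sub>F n in sequentially. crossing_bound (As n) (mat_add a b) (\<epsilon> * card (As n))"
  proof (rule eventually_mono, elim conjE)
    fix n assume ca: "crossing_bound (As n) a (\<epsilon>/4 * card (As n))"
      and cb: "crossing_bound (As n) b (\<epsilon>/4 * card (As n))"
    have "crossing_bound (As n) (mat_add a b) (2 * (\<epsilon>/4 * card (As n)) + 2 * (\<epsilon>/4 * card (As n)))"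
      by (rule crossing_bound_triangle[OF _ ca cb]) (simp add: mat_add_def norm_triangle_ineq)
    then show "crossing_bound (As n) (mat_add a b) (\<epsilon> * card (As n))"
      by (rule crossing_bound_mono) simp
  qed
qed

lemma small_crossing_scale:
  assumes a: "small_crossing As a"
  shows "small_crossing As (mat_scale c a)"
  unfolding small_crossing_def
proof (intro conjI allI impI)
  show "bounded_mat (mat_scale c a)" using a by (intro bounded_scale small_crossing_bounded)
  fix \<epsilon> :: real assume e: "\<epsilon> > 0"
  define k where "k = (cmod c)\<^sup>2"
  have k: "k \<ge> 0" unfolding k_def by simp
  have "k * (\<epsilon> / (k + 1)) = \<epsilon> * (k / (k + 1))" by simp
  also have "\<dots> \<le> \<epsilon> * 1" using e k by (intro mult_left_mono) auto
  finally have k_le: "k * (\<epsilon> / (k + 1)) \<le> \<epsilon>" by simp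
  have "\<forall>\<^sub>F n in sequentially. crossing_bound (As n) a (\<epsilon> / (k + 1) * card (As n))"
    using e k by (intro small_crossingD[OF a]) simp
  then show "\<forall>\<^sub>F n in sequentially. crossing_bound (As n) (mat_scale c a) (\<epsilon> * card (As n))"
  proof (rule eventually_mono)
    fix n assume "crossing_bound (As n) a (\<epsilon> / (k + 1) * card (As n))"
    then have "crossing_bound (As n) (mat_scale c a) (k * (\<epsilon> / (k + 1) * card (As n)))"
      unfolding k_def by (rule crossing_bound_scale)
    moreover have "k * (\<epsilon> / (k + 1) * card (As n)) \<le> \<epsilon> * card (As n)"
      using mult_right_mono[OF k_le, of "card (As n)"] by (simp add: mult.assoc)
    ultimately show "crossing_bound (As n) (mat_scale c a) (\<epsilon> * card (As n))"
      by (rule crossing_bound_mono)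
  qed
qed

lemma small_crossing_adj:
  assumes a: "small_crossing As a"
  shows "small_crossing As (mat_adj a)"
  unfolding small_crossing_def
proof (intro conjI allI impI)
  show "bounded_mat (mat_adj a)" using small_crossing_bounded[OF a] by (rule bounded_adj(1))
  fix \<epsilon> :: real assume "\<epsilon> > 0"
  show "\<forall>\<^sub>F n in sequentially. crossing_bound (As n) (mat_adj a) (\<epsilon> * card (As n))"
    using small_crossingD[OF a \<open>\<epsilon> > 0\<close>] by (rule eventually_mono) (rule crossing_bound_adj)
qed

lemma small_crossing_mult:
  assumes a: "small_crossing As a" and b: "small_crossing As b" and fin: "\<And>n. finite (As n)"
  shows "small_crossing As (mat_mult a b)"
  unfolding small_crossing_def
proof (intro conjI allI impI)
  have ba: "bounded_mat a" and bb: "bounded_mat b" using a b by (auto intro: small_crossing_bounded)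
  then show "bounded_mat (mat_mult a b)" by (rule bounded_mult)
  fix \<epsilon> :: real assume e: "\<epsilon> > 0"
  define k where "k = (op_norm a)\<^sup>2 + (op_norm b)\<^sup>2"
  define \<delta> where "\<delta> = \<epsilon> / (4 * k + 1)"
  have k: "k \<ge> 0" unfolding k_def by simp
  have \<delta>: "\<delta> > 0" "4 * k * \<delta> \<le> \<epsilon>" unfolding \<delta>_def using e k by (auto simp: field_simps)
  have "\<forall>\<^sub>F n in sequentially. crossing_bound (As n) a (\<delta> * card (As n)) \<and> crossing_bound (As n) b (\<delta> * card (As n))"
    using small_crossingD[OF a \<delta>(1)] small_crossingD[OF b \<delta>(1)] by (rule eventually_conj)
  then show "\<forall>\<^sub>F n in sequentially. crossing_bound (As n) (mat_mult a b) (\<epsilon> * card (As n))"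
  proof (rule eventually_mono, elim conjE)
    fix n assume "crossing_bound (As n) a (\<delta> * card (As n))" "crossing_bound (As n) b (\<delta> * card (As n))"
    then have "crossing_bound (As n) (mat_mult a b)
        (4 * ((op_norm b)\<^sup>2 * (\<delta> * card (As n)) + (op_norm a)\<^sup>2 * (\<delta> * card (As n))))"
      by (rule crossing_bound_mult[OF ba bb fin])
    moreover have "4 * ((op_norm b)\<^sup>2 * (\<delta> * card (As n)) + (op_norm a)\<^sup>2 * (\<delta> * card (As n)))
        = (4 * k * \<delta>) * card (As n)"
      unfolding k_def by (simp add: algebra_simps)
    ultimately show "crossing_bound (As n) (mat_mult a b) (\<epsilon> * card (As n))"
      using \<delta>(2) by (auto elim!: crossing_bound_mono intro: mult_right_mono)
  qed
qed

text \<open>An operator-norm approximant E = f N - K with small norm has crossing mass at most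
  2 |A| (op_norm E)^2, which is small relative to |A|.\<close>
lemma small_crossing_limit:
  assumes f: "\<And>m. small_crossing As (f m)" and K: "bounded_mat K"
    and lim: "(\<lambda>m. op_norm (mat_diff (f m) K)) \<longlonglongrightarrow> 0" and fin: "\<And>n. finite (As n)"
  shows "small_crossing As K"
  unfolding small_crossing_def
proof (intro conjI allI impI K)
  fix \<epsilon> :: real assume e: "\<epsilon> > 0"
  obtain N where "\<forall>n\<ge>N. norm (op_norm (mat_diff (f n) K) - 0) < sqrt (\<epsilon>/8)"
    using LIMSEQ_D[OF lim, of "sqrt (\<epsilon>/8)"] e by auto
  then have m: "op_norm (mat_diff (f N) K) < sqrt (\<epsilon>/8)" by auto
  define E where "E = mat_diff (f N) K"
  have E: "bounded_mat E" unfolding E_def using small_crossing_bounded[OF f] K by (rule bounded_diff)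
  have "(op_norm E)\<^sup>2 \<le> (sqrt (\<epsilon>/8))\<^sup>2"
    using m op_norm_nonneg[OF E] unfolding E_def by (intro power_mono) auto
  then have small_E: "(op_norm E)\<^sup>2 \<le> \<epsilon>/8" using e by simp
  have K_le: "cmod (K x z) \<le> cmod (f N x z) + cmod (E x z)" for x z
    using norm_triangle_ineq4[of "f N x z" "E x z"] unfolding E_def mat_diff_def by simp
  have "\<forall>\<^sub>F n in sequentially. crossing_bound (As n) (f N) (\<epsilon>/4 * card (As n))"
    using e by (intro small_crossingD[OF f]) simp
  then show "\<forall>\<^sub>F n in sequentially. crossing_bound (As n) K (\<epsilon> * card (As n))"
  proof (rule eventually_mono)
    fix n assume "crossing_bound (As n) (f N) (\<epsilon>/4 * card (As n))"
    then have "crossing_bound (As n) K (2 * (\<epsilon>/4 * card (As n)) + 2 * (2 * card (As n) * (op_norm E)\<^sup>2))"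
      by (rule crossing_bound_triangle[OF K_le _ crossing_bound_bounded[OF fin E]])
    moreover have "2 * (2 * card (As n) * (op_norm E)\<^sup>2) \<le> 2 * (2 * card (As n) * (\<epsilon>/8))"
      using small_E by (intro mult_left_mono) auto
    ultimately show "crossing_bound (As n) K (\<epsilon> * card (As n))"
      by (elim crossing_bound_mono) (simp add: algebra_simps)
  qed
qed

lemma cstar_gen_least:
  assumes "G \<subseteq> S" "S \<subseteq> Collect bounded_mat"
    and "\<And>a b. a \<in> S \<Longrightarrow> b \<in> S \<Longrightarrow> mat_add a b \<in> S"
    and "\<And>a b. a \<in> S \<Longrightarrow> b \<in> S \<Longrightarrow> mat_mult a b \<in> S"
    and "\<And>c a. a \<in> S \<Longrightarrow> mat_scale c a \<in> S"
    and "\<And>a. a \<in> S \<Longrightarrow> mat_adj a \<in> S"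
    and "\<And>f K. (\<And>n. f n \<in> S) \<Longrightarrow> bounded_mat K \<Longrightarrow> (\<lambda>n. op_norm (mat_diff (f n) K)) \<longlonglongrightarrow> 0 \<Longrightarrow> K \<in> S"
  shows "cstar_gen G \<subseteq> S"
  unfolding cstar_gen_def
  by (rule Inter_lower, intro CollectI conjI ballI allI impI) (use assms in \<open>auto intro: assms(7)\<close>)

lemma cstar_gen_small_crossing:
  assumes G: "G \<subseteq> Collect (small_crossing As)" and fin: "\<And>n. finite (As n)"
  shows "cstar_gen G \<subseteq> Collect (small_crossing As)"
proof (rule cstar_gen_least[OF G])
  show "Collect (small_crossing As) \<subseteq> Collect bounded_mat" using small_crossing_bounded by blast
  show "\<And>f K. (\<And>n. f n \<in> Collect (small_crossing As)) \<Longrightarrow> bounded_mat K \<Longrightarrow>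
      (\<lambda>n. op_norm (mat_diff (f n) K)) \<longlonglongrightarrow> 0 \<Longrightarrow> K \<in> Collect (small_crossing As)"
    using small_crossing_limit fin by (metis mem_Collect_eq)
qed (simp_all add: small_crossing_add small_crossing_mult[OF _ _ fin] small_crossing_scale small_crossing_adj)

section \<open>Diagonal projections\<close>

lemma infsum_if_eq: "(\<Sum>\<^sub>\<infinity>y. if y = a then g y else 0) = (g a :: complex)"
proof -
  have "(\<Sum>\<^sub>\<infinity>y. if y = a then g y else 0) = infsum g {a}" by (rule infsum_cong_neutral) auto
  then show ?thesis by simp
qed

lemma mat_mult_mult_op_left: "mat_mult (mult_op d) T x z = d x * T x z"
proof -
  have "(\<lambda>y. mult_op d x y * T y z) = (\<lambda>y. if y = x then d y * T y z else 0)"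
    unfolding mult_op_def by auto
  then show ?thesis unfolding mat_mult_def by (simp add: infsum_if_eq)
qed

lemma mat_mult_mult_op_right: "mat_mult T (mult_op d) x z = T x z * d z"
proof -
  have "(\<lambda>y. T x y * mult_op d y z) = (\<lambda>y. if y = z then T x y * d y else 0)"
    unfolding mult_op_def by auto
  then show ?thesis unfolding mat_mult_def by (simp add: infsum_if_eq)
qed

lemma hs_norm_nonneg: "hs_norm K \<ge> 0"
  unfolding hs_norm_def by (simp add: infsum_nonneg)

lemma infsum_le_of_finite_sums_le:
  fixes f :: "'a \<Rightarrow> real"
  assumes "\<And>W. finite W \<Longrightarrow> sum f W \<le> B" "\<And>x. f x \<ge> 0"
  shows "infsum f UNIV \<le> B"
proof (cases "f summable_on UNIV")
  case True then show ?thesis using infsum_le_finite_sums assms(1) by blast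
next
  case False then show ?thesis using infsum_not_exists[OF False] assms(1)[of "{}"] by simp
qed

lemma hs_norm_commutator_indicator_le:
  assumes "crossing_bound A T B"
  shows "hs_norm (mat_diff (mat_mult (mult_op (indicator A)) T) (mat_mult T (mult_op (indicator A)))) \<le> sqrt B"
proof -
  let ?D = "mat_diff (mat_mult (mult_op (indicator A)) T) (mat_mult T (mult_op (indicator A)))"
  have entry: "(cmod (?D x z))\<^sup>2 = (if (x, z) \<in> crossing A then (cmod (T x z))\<^sup>2 else 0)" for x z
    unfolding mat_diff_def mat_mult_mult_op_left mat_mult_mult_op_right
    by (auto simp: indicator_def crossing_def)
  have "(\<Sum>\<^sub>\<infinity>p. (cmod (?D (fst p) (snd p)))\<^sup>2) \<le> B"
  proof (rule infsum_le_of_finite_sums_le)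
    fix W :: "('a \<times> 'a) set" assume W: "finite W"
    have "(\<Sum>p\<in>W. (cmod (?D (fst p) (snd p)))\<^sup>2) = (\<Sum>p\<in>W \<inter> crossing A. (cmod (T (fst p) (snd p)))\<^sup>2)"
      unfolding entry prod.collapse by (simp add: sum.inter_restrict[OF W] if_distrib cong: if_cong)
    also have "\<dots> \<le> B" using W by (intro crossing_boundD[OF assms]) auto
    finally show "(\<Sum>p\<in>W. (cmod (?D (fst p) (snd p)))\<^sup>2) \<le> B" .
  qed simp
  then show ?thesis unfolding hs_norm_def by simp
qed

lemma hs_norm_mult_op_indicator:
  assumes "finite A"
  shows "hs_norm (mult_op (indicator A)) = sqrt (card A)"
proof -
  have "(\<Sum>\<^sub>\<infinity>p. (cmod (mult_op (indicator A) (fst p) (snd p)))\<^sup>2) = infsum (\<lambda>p. 1::real) ((\<lambda>x. (x, x)) ` A)"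
    by (rule infsum_cong_neutral) (auto simp: mult_op_def indicator_def image_iff)
  also have "\<dots> = card A" using assms by (simp add: card_image inj_on_def)
  finally show ?thesis unfolding hs_norm_def by simp
qed

lemma bounded_mult_op_indicator: "bounded_mat (mult_op (indicator A))"
  by (rule bounded_mult_op[of _ 1]) (simp add: indicator_def)

lemma orth_proj_mult_op_indicator: "orth_proj (mult_op (indicator A))"
  unfolding orth_proj_def
proof (intro conjI bounded_mult_op_indicator)
  show "mat_mult (mult_op (indicator A)) (mult_op (indicator A)) = mult_op (indicator A)"
    by (intro ext, simp only: mat_mult_mult_op_left) (simp add: mult_op_def indicator_def)
  show "mat_adj (mult_op (indicator A)) = mult_op (indicator A)"
    by (intro ext) (simp add: mat_adj_def mult_op_def indicator_def)
qed

text \<open>The columns of the diagonal projection onto a finite A are spanned by its columns at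
  the points of A, enumerated by some bijection from {0..<card A}.\<close>
lemma finite_rank_mult_op_indicator:
  assumes A: "finite A"
  shows "finite_rank (mult_op (indicator A))"
proof -
  define P where "P = mult_op (indicator A :: 'a \<Rightarrow> complex)"
  obtain e where e: "bij_betw e {0..<card A} A" using ex_bij_betw_nat_finite[OF A] by blast
  have "P x y = (\<Sum>i<card A. (if e i = y then 1 else 0) * P x (e i))" for x y
  proof -
    have "(\<Sum>i<card A. (if e i = y then 1 else 0) * P x (e i))
        = (\<Sum>i\<in>{0..<card A}. (\<lambda>a. if a = y then P x a else 0) (e i))"
      unfolding lessThan_atLeast0 by (intro sum.cong refl) simp
    also have "\<dots> = (\<Sum>a\<in>A. if a = y then P x a else 0)"
      by (rule sum.reindex_bij_betw[OF e])
    also have "\<dots> = P x y" using A by (simp add: P_def mult_op_def indicator_def)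
    finally show ?thesis by simp
  qed
  note columns = this
  show ?thesis unfolding finite_rank_def P_def[symmetric]
  proof (intro exI[of _ "card A"] exI[of _ "\<lambda>i x. P x (e i)"] allI)
    fix y show "\<exists>c. \<forall>x. P x y = (\<Sum>i<card A. c i * P x (e i))"
      using columns by (intro exI[of _ "\<lambda>i. if e i = y then 1 else 0"]) blast
  qed
qed

lemma mult_op_indicator_nonzero: "A \<noteq> {} \<Longrightarrow> mult_op (indicator A) \<noteq> mat_zero"
  by (auto simp: mult_op_def mat_zero_def indicator_def fun_eq_iff)

lemma commutator_ratio_tendsto_zero:
  assumes T: "small_crossing As T" and fin: "\<And>n. finite (As n)" and ne: "\<And>n. As n \<noteq> {}"
  shows "(\<lambda>n. hs_norm (mat_diff (mat_mult (mult_op (indicator (As n))) T) (mat_mult T (mult_op (indicator (As n)))))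
           / hs_norm (mult_op (indicator (As n)))) \<longlonglongrightarrow> 0"
    (is "(\<lambda>n. ?h n / _) \<longlonglongrightarrow> 0")
proof (rule order_tendstoI)
  fix a :: real assume "a < 0"
  then show "\<forall>\<^sub>F n in sequentially. a < ?h n / hs_norm (mult_op (indicator (As n)))"
    using hs_norm_nonneg by (auto intro!: always_eventually less_le_trans[OF _ divide_nonneg_nonneg])
next
  fix r :: real assume r: "0 < r"
  then have "(r/2)\<^sup>2 > 0" by simp
  from small_crossingD[OF T this] show "\<forall>\<^sub>F n in sequentially. ?h n / hs_norm (mult_op (indicator (As n))) < r"
  proof (rule eventually_mono)
    fix n assume crossing: "crossing_bound (As n) T ((r/2)\<^sup>2 * card (As n))"
    have c: "card (As n) > 0" using fin[of n] ne[of n] by (simp add: card_gt_0_iff)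
    have "?h n \<le> sqrt ((r/2)\<^sup>2 * card (As n))"
      by (rule hs_norm_commutator_indicator_le[OF crossing])
    also have "\<dots> = r/2 * sqrt (card (As n))" using r by (simp add: real_sqrt_mult)
    finally have "?h n / sqrt (card (As n)) \<le> r/2" using c by (simp add: divide_le_eq)
    then show "?h n / hs_norm (mult_op (indicator (As n))) < r"
      using r unfolding hs_norm_mult_op_indicator[OF fin] by linarith
  qed
qed

section \<open>F{\o}lner sequences and the theorem\<close>

lemma folner_set_finite_family:
  fixes g :: "'s \<Rightarrow> ('x \<rightharpoonup> 'x)" and \<mu> :: "'x set \<Rightarrow> ennreal" and \<epsilon> :: real
  assumes inj: "\<And>s. inj_on (g s) (dom (g s))"
    and mean: "finitely_additive_mean \<mu>"
    and invariant: "\<And>s B. B \<subseteq> dom (g s) \<Longrightarrow> \<mu> B = \<mu> (ran (g s |` B))"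
    and F: "finite F" and eps: "\<epsilon> > 0"
  shows "\<exists>A. finite A \<and> A \<noteq> {} \<and> (\<forall>s\<in>F. real (card (map_boundary (g s) A)) \<le> \<epsilon> * card A)"
proof -
  interpret invariant_mean \<mu> "g ` F"
    using mean inj invariant F unfolding finitely_additive_mean_def by unfold_locales auto
  show ?thesis using folner_set_exists[OF eps] by simp
qed

lemma folner_sequence_exists:
  fixes g :: "'s \<Rightarrow> ('x \<rightharpoonup> 'x)" and \<mu> :: "'x set \<Rightarrow> ennreal"
  assumes countable: "countable (UNIV :: 's set)"
    and inj: "\<And>s. inj_on (g s) (dom (g s))"
    and mean: "finitely_additive_mean \<mu>"
    and invariant: "\<And>s B. B \<subseteq> dom (g s) \<Longrightarrow> \<mu> B = \<mu> (ran (g s |` B))"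
  obtains As where "\<And>n. finite (As n)" "\<And>n. As n \<noteq> {}"
    "\<And>s (\<epsilon>::real). \<epsilon> > 0 \<Longrightarrow> \<forall>\<^sub>F n in sequentially. card (map_boundary (g s) (As n)) \<le> \<epsilon> * card (As n)"
proof -
  define enum where "enum = from_nat_into (UNIV :: 's set)"
  have "\<forall>n. \<exists>A. finite A \<and> A \<noteq> {} \<and>
      (\<forall>s\<in>enum ` {..n}. real (card (map_boundary (g s) A)) \<le> 1 / real (Suc n) * card A)"
  proof
    fix n
    show "\<exists>A. finite A \<and> A \<noteq> {} \<and>
        (\<forall>s\<in>enum ` {..n}. real (card (map_boundary (g s) A)) \<le> 1 / real (Suc n) * card A)"
      by (rule folner_set_finite_family[where g = g, OF inj mean invariant]) simp_all
  qed
  from choice[OF this] obtain As where As: "\<And>n. finite (As n)" "\<And>n. As n \<noteq> {}"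
    "\<And>n s. s \<in> enum ` {..n} \<Longrightarrow> real (card (map_boundary (g s) (As n))) \<le> 1 / real (Suc n) * card (As n)"
    by blast
  have folner: "\<forall>\<^sub>F n in sequentially. card (map_boundary (g s) (As n)) \<le> \<epsilon> * card (As n)"
    if "\<epsilon> > 0" for s and \<epsilon> :: real
  proof -
    obtain k where k: "enum k = s" using from_nat_into_surj[OF countable] unfolding enum_def by blast
    obtain M where M: "inverse (real (Suc M)) < \<epsilon>" using reals_Archimedean[OF \<open>\<epsilon> > 0\<close>] by blast
    show ?thesis
    proof (rule eventually_sequentiallyI[of "max k M"])
      fix n assume n: "max k M \<le> n"
      then have "1 / real (Suc n) \<le> inverse (real (Suc M))" by (simp add: inverse_eq_divide frac_le)
      then have "1 / real (Suc n) * card (As n) \<le> \<epsilon> * card (As n)"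
        using M by (intro mult_right_mono) auto
      moreover have "s \<in> enum ` {..n}" using k n by auto
      ultimately show "card (map_boundary (g s) (As n)) \<le> \<epsilon> * card (As n)"
        using As(3)[of s n] by linarith
    qed
  qed
  show thesis by (rule that[OF As(1,2) folner])
qed

lemma representation_inj_on: "representation \<alpha> \<Longrightarrow> inj_on (\<alpha> s) (dom (\<alpha> s))"
  unfolding representation_def partial_bij_def by blast

lemma domain_measurable_folner_sequence:
  fixes \<alpha> :: "'s::monoid_mult \<Rightarrow> ('x \<rightharpoonup> 'x)"
  assumes "countable (UNIV :: 's set)" "representation \<alpha>" "domain_measurable \<alpha>"
  obtains As where "\<And>n. finite (As n)" "\<And>n. As n \<noteq> {}"
    "\<And>s (\<epsilon>::real). \<epsilon> > 0 \<Longrightarrow> \<forall>\<^sub>F n in sequentially. card (map_boundary (\<alpha> s) (As n)) \<le> \<epsilon> * card (As n)"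
proof -
  obtain \<mu> :: "'x set \<Rightarrow> ennreal" where
    "\<forall>A B. A \<inter> B = {} \<longrightarrow> \<mu> (A \<union> B) = \<mu> A + \<mu> B" "\<mu> UNIV = 1"
    and invariant: "\<And>s B. B \<subseteq> dom (\<alpha> s) \<Longrightarrow> \<mu> B = \<mu> (ran (\<alpha> s |` B))"
    using assms(3) unfolding domain_measurable_def by blast
  then have "finitely_additive_mean \<mu>" by unfold_locales auto
  then show thesis
    using folner_sequence_exists[where g = \<alpha>, OF assms(1) representation_inj_on[OF assms(2)] _ invariant] that
    by metis
qed

lemma small_crossing_partial_bij:
  assumes inj: "inj_on g (dom g)" and fin: "\<And>n. finite (As n)"
    and folner: "\<And>\<epsilon>::real. \<epsilon> > 0 \<Longrightarrow> \<forall>\<^sub>F n in sequentially. card (map_boundary g (As n)) \<le> \<epsilon> * card (As n)"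
  shows "small_crossing As (\<lambda>y x. if g x = Some y then 1 else 0)"
  unfolding small_crossing_def
proof (intro conjI allI impI bounded_partial_bij_mat[OF inj])
  fix \<epsilon> :: real assume "\<epsilon> > 0"
  from folner[OF this]
  show "\<forall>\<^sub>F n in sequentially. crossing_bound (As n) (\<lambda>y x. if g x = Some y then 1 else 0) (\<epsilon> * card (As n))"
    by (rule eventually_mono) (rule crossing_bound_mono[OF crossing_bound_partial_bij_mat[OF inj fin]])
qed

lemma small_crossing_mult_op:
  assumes "\<And>x. cmod (f x) \<le> C"
  shows "small_crossing As (mult_op f)"
  unfolding small_crossing_def
proof (intro conjI allI impI bounded_mult_op[OF assms])
  fix \<epsilon> :: real assume "\<epsilon> > 0"
  then show "\<forall>\<^sub>F n in sequentially. crossing_bound (As n) (mult_op f) (\<epsilon> * card (As n))"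
    by (intro always_eventually allI crossing_bound_mono[OF crossing_bound_mult_op]) simp
qed

lemma R_X_small_crossing:
  fixes \<alpha> :: "'s \<Rightarrow> ('x \<rightharpoonup> 'x)" and As :: "nat \<Rightarrow> 'x set"
  assumes inj: "\<And>s. inj_on (\<alpha> s) (dom (\<alpha> s))" and fin: "\<And>n. finite (As n)"
    and folner: "\<And>s (\<epsilon>::real). \<epsilon> > 0 \<Longrightarrow> \<forall>\<^sub>F n in sequentially. card (map_boundary (\<alpha> s) (As n)) \<le> \<epsilon> * card (As n)"
  shows "R_X \<alpha> \<subseteq> Collect (small_crossing As)"
  unfolding R_X_def
proof (rule cstar_gen_small_crossing[OF _ fin], intro Un_least subsetI CollectI)
  fix T :: "'x mat" assume "T \<in> range (V_op \<alpha>)"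
  then obtain s where "T = V_op \<alpha> s" by blast
  then show "small_crossing As T"
    unfolding V_op_def by (simp add: small_crossing_partial_bij[OF inj fin folner])
next
  fix T :: "'x mat" assume "T \<in> {mult_op f | f. \<exists>C. \<forall>x. cmod (f x) \<le> C}"
  then show "small_crossing As T" using small_crossing_mult_op by blast
qed

lemma generators_subset_cstar_gen: "G \<subseteq> cstar_gen G"
  unfolding cstar_gen_def by blast

lemma mult_op_in_R_X: "(\<And>x. cmod (f x) \<le> C) \<Longrightarrow> mult_op f \<in> R_X \<alpha>"
  unfolding R_X_def by (rule subsetD[OF generators_subset_cstar_gen]) blast

theorem mainTheorem16:
  fixes \<alpha> :: "'s::monoid_mult \<Rightarrow> ('x \<rightharpoonup> 'x)"
  assumes "inverse_monoid TYPE('s)"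
    and "countable (UNIV :: 's set)"
    and "representation \<alpha>"
    and "domain_measurable \<alpha>"
  shows "\<exists>P :: nat \<Rightarrow> 'x mat.
           (\<forall>n. P n \<in> R_X \<alpha> \<and> orth_proj (P n) \<and> finite_rank (P n) \<and> P n \<noteq> mat_zero) \<and>
           (\<forall>T\<in>R_X \<alpha>. (\<lambda>n. hs_norm (mat_diff (mat_mult (P n) T) (mat_mult T (P n)))
                              / hs_norm (P n)) \<longlonglongrightarrow> 0)"
proof -
  obtain As where fin: "\<And>n. finite (As n)" and ne: "\<And>n. As n \<noteq> {}"
    and folner: "\<And>s (\<epsilon>::real). \<epsilon> > 0 \<Longrightarrow>
      \<forall>\<^sub>F n in sequentially. card (map_boundary (\<alpha> s) (As n)) \<le> \<epsilon> * card (As n)"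
    using domain_measurable_folner_sequence[OF assms(2-4)] by metis
  have small: "R_X \<alpha> \<subseteq> Collect (small_crossing As)"
    by (rule R_X_small_crossing[OF representation_inj_on[OF assms(3)] fin folner])
  show ?thesis
  proof (intro exI[of _ "\<lambda>n. mult_op (indicator (As n))"] conjI allI ballI)
    fix n
    show "mult_op (indicator (As n)) \<in> R_X \<alpha>" by (rule mult_op_in_R_X[of _ 1]) (simp add: indicator_def)
    show "orth_proj (mult_op (indicator (As n)))" by (rule orth_proj_mult_op_indicator)
    show "finite_rank (mult_op (indicator (As n)))" by (rule finite_rank_mult_op_indicator[OF fin])
    show "mult_op (indicator (As n)) \<noteq> mat_zero" by (rule mult_op_indicator_nonzero[OF ne])
  next
    fix T assume "T \<in> R_X \<alpha>"
    then show "(\<lambda>n. hs_norm (mat_diff (mat_mult (mult_op (indicator (As n))) T) (mat_mult T (mult_op (indicator (As n)))))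
        / hs_norm (mult_op (indicator (As n)))) \<longlonglongrightarrow> 0"
      using small by (intro commutator_ratio_tendsto_zero[OF _ fin ne]) blast
  qed
qed

end
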